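(* Let $(M,\le)$ be a finite ordered monoid. If $M$ is a $T_q$ monoid for some $q>1$, or if $M$ is divided (as an ordered monoid) by one of $BA_2^+$, $U^+$, or a non-commutative group (with any stable order), then $N^1(M)=\Omega(n)$.
   Context: $M$ is a $T_q$ monoid if there exist idempotents $e,f\in M$ with $(ef)^qe=e$ and $(ef)^re\ne e$ for every positive integer $r$ not divisible by $q$. Syntactic ordered monoid of $L\subseteq\Sigma^*$: write $x\preceq_L y$ if for all $u,v$, $uyv\in L\Rightarrow uxv\in L$; $\Sigma^*/\equiv_L$ (with $x\equiv_L y$ iff $x\preceq_L y$ and $y\preceq_L x$) ordered by $[x]\le[y]$ iff $x\preceq_L y$. $BA_2^+$ is the syntactic ordered monoid of $(ab)^*\subseteq\{a,b\}^*$; $U^+$ is the syntactic ordered monoid of the complement in $\{a,b\}^*$ of $(a\cup b)^*aa(a\cup b)^*$. An ordered monoid $N$ divides $M$ if there is a surjective order-preserving monoid morphism from a submonoid of $M$ (restricted order) onto $N$. A finite ordered monoid has a partial order with $x\le y\Rightarrow zx\le zy,\ xz\le yz$. $N^1(f)$ is the non-deterministic communication complexity of $f:X\times Y\to\{0,1\}$; equivalently, up to an additive constant 2, $\log_2$ of the minimum number of rectangles $S\times T$ on which $f\equiv1$ covering $f^{-1}(1)$. For an order ideal $I$ ($y\in I, x\le y\Rightarrow x\in I$), $N^1(M,I)(n)$ is $N^1$ of the function where Alice receives $m_1,m_3,\dots,m_{2n-1}$, Bob receives $m_2,\dots,m_{2n}$, value $1$ iff $m_1\cdots m_{2n}\in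 I$; $N^1(M)=\max_I N^1(M,I)$. *)

theory Defs
  imports Main "HOL-Library.Landau_Symbols"
begin

record 'a omonoid =
  carrier :: "'a set"
  mult :: "'a \<Rightarrow> 'a \<Rightarrow> 'a"
  unit :: 'a
  le :: "'a \<Rightarrow> 'a \<Rightarrow> bool"

definition ordered_monoid :: "'a omonoid \<Rightarrow> bool" where
  "ordered_monoid M \<longleftrightarrow>
     unit M \<in> carrier M \<and>
     (\<forall>x\<in>carrier M. \<forall>y\<in>carrier M. mult M x y \<in> carrier M) \<and>
     (\<forall>x\<in>carrier M. \<forall>y\<in>carrier M. \<forall>z\<in>carrier M.
        mult M (mult M x y) z = mult M x (mult M y z)) \<and>
     (\<forall>x\<in>carrier M. mult M (unit M) x = x \<and> mult M x (unit M) = x) \<and>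
     (\<forall>x\<in>carrier M. le M x x) \<and>
     (\<forall>x\<in>carrier M. \<forall>y\<in>carrier M. le M x y \<and> le M y x \<longrightarrow> x = y) \<and>
     (\<forall>x\<in>carrier M. \<forall>y\<in>carrier M. \<forall>z\<in>carrier M. le M x y \<and> le M y z \<longrightarrow> le M x z) \<and>
     (\<forall>x\<in>carrier M. \<forall>y\<in>carrier M. \<forall>z\<in>carrier M.
        le M x y \<longrightarrow> le M (mult M z x) (mult M z y) \<and> le M (mult M x z) (mult M y z))"

primrec opow :: "'a omonoid \<Rightarrow> 'a \<Rightarrow> nat \<Rightarrow> 'a" where
  "opow M x 0 = unit M"
| "opow M x (Suc n) = mult M x (opow M x n)"

definition is_Tq :: "'a omonoid \<Rightarrow> nat \<Rightarrow> bool" where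
  "is_Tq M q \<longleftrightarrow> (\<exists>e\<in>carrier M. \<exists>f\<in>carrier M.
      mult M e e = e \<and> mult M f f = f \<and>
      mult M (opow M (mult M e f) q) e = e \<and>
      (\<forall>r::nat. r > 0 \<and> \<not> q dvd r \<longrightarrow> mult M (opow M (mult M e f) r) e \<noteq> e))"

definition odivides :: "'b omonoid \<Rightarrow> 'a omonoid \<Rightarrow> bool" where
  "odivides N M \<longleftrightarrow> (\<exists>S h.
      S \<subseteq> carrier M \<and> unit M \<in> S \<and> (\<forall>x\<in>S. \<forall>y\<in>S. mult M x y \<in> S) \<and>
      h ` S = carrier N \<and> h (unit M) = unit N \<and>
      (\<forall>x\<in>S. \<forall>y\<in>S. h (mult M x y) = mult N (h x) (h y)) \<and>
      (\<forall>x\<in>S. \<forall>y\<in>S. le M x y \<longrightarrow> le N (h x) (h y)))"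

definition is_group :: "'a omonoid \<Rightarrow> bool" where
  "is_group G \<longleftrightarrow> (\<forall>x\<in>carrier G. \<exists>y\<in>carrier G. mult G x y = unit G \<and> mult G y x = unit G)"

definition noncommutative :: "'a omonoid \<Rightarrow> bool" where
  "noncommutative G \<longleftrightarrow> (\<exists>x\<in>carrier G. \<exists>y\<in>carrier G. mult G x y \<noteq> mult G y x)"

definition synle :: "'c list set \<Rightarrow> 'c list \<Rightarrow> 'c list \<Rightarrow> bool" where
  "synle L x y \<longleftrightarrow> (\<forall>u v. u @ y @ v \<in> L \<longrightarrow> u @ x @ v \<in> L)"

definition syneq :: "'c list set \<Rightarrow> 'c list \<Rightarrow> 'c list \<Rightarrow> bool" where
  "syneq L x y \<longleftrightarrow> synle L x y \<and> synle L y x"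

definition synclass :: "'c list set \<Rightarrow> 'c list \<Rightarrow> 'c list set" where
  "synclass L w = {x. syneq L x w}"

definition rep :: "'c list set \<Rightarrow> 'c list" where
  "rep A = (SOME x. x \<in> A)"

definition synmon :: "'c list set \<Rightarrow> 'c list set omonoid" where
  "synmon L = \<lparr> carrier = range (synclass L),
                mult = (\<lambda>A B. synclass L (rep A @ rep B)),
                unit = synclass L [],
                le = (\<lambda>A B. synle L (rep A) (rep B)) \<rparr>"

datatype ab = a | b

definition L_BA2 :: "ab list set" where
  "L_BA2 = {concat (replicate k [a, b]) | k. True}"

definition L_U :: "ab list set" where
  "L_U = {w. \<not> (\<exists>u v. w = u @ [a, a] @ v)}"

definition BA2_plus :: "ab list set omonoid" where
  "BA2_plus = synmon L_BA2"

definition U_plus :: "ab list set omonoid" where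
  "U_plus = synmon L_U"

definition cover_num :: "'x set \<Rightarrow> 'y set \<Rightarrow> ('x \<Rightarrow> 'y \<Rightarrow> bool) \<Rightarrow> nat" where
  "cover_num X Y f = (LEAST k. \<exists>R :: nat \<Rightarrow> 'x set \<times> 'y set.
      (\<forall>i<k. fst (R i) \<subseteq> X \<and> snd (R i) \<subseteq> Y \<and>
             (\<forall>x\<in>fst (R i). \<forall>y\<in>snd (R i). f x y)) \<and>
      {(x, y). x \<in> X \<and> y \<in> Y \<and> f x y} = (\<Union>i<k. fst (R i) \<times> snd (R i)))"

definition N1 :: "'x set \<Rightarrow> 'y set \<Rightarrow> ('x \<Rightarrow> 'y \<Rightarrow> bool) \<Rightarrow> real" where
  "N1 X Y f = log 2 (real (max 1 (cover_num X Y f)))"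

definition lprod :: "'a omonoid \<Rightarrow> 'a list \<Rightarrow> 'a" where
  "lprod M zs = foldr (mult M) zs (unit M)"

text \<open>Alice's list xs = [m1,m3,...], Bob's ys = [m2,m4,...]; product m1 m2 m3 m4 ...\<close>
definition interleave :: "'a list \<Rightarrow> 'a list \<Rightarrow> 'a list" where
  "interleave xs ys = concat (map (\<lambda>(x, y). [x, y]) (zip xs ys))"

definition inputs :: "'a omonoid \<Rightarrow> nat \<Rightarrow> 'a list set" where
  "inputs M n = {xs. length xs = n \<and> set xs \<subseteq> carrier M}"

definition order_ideal :: "'a omonoid \<Rightarrow> 'a set \<Rightarrow> bool" where
  "order_ideal M I \<longleftrightarrow> I \<subseteq> carrier M \<and>
     (\<forall>x\<in>carrier M. \<forall>y\<in>I. le M x y \<longrightarrow> x \<in> I)"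

definition N1_ideal :: "'a omonoid \<Rightarrow> 'a set \<Rightarrow> nat \<Rightarrow> real" where
  "N1_ideal M I n = N1 (inputs M n) (inputs M n) (\<lambda>xs ys. lprod M (interleave xs ys) \<in> I)"

definition N1_mon :: "'a omonoid \<Rightarrow> nat \<Rightarrow> real" where
  "N1_mon M n = Max ((\<lambda>I. N1_ideal M I n) ` {I. order_ideal M I})"

end

theory Submission
  imports Defs "HOL-Computational_Algebra.Primes"
begin

text \<open>
  The proof is by
  reduction from two problems on \<open>k\<close>-bit strings, read as subsets of \<open>{0..<k}\<close>.

  \<^item> Rectangle covers pull back along separate input encodings (\<open>cover_reduction\<close>) and are
    bounded below by counting (\<open>cover_counting\<close>).
  \<^item> Disjointness needs \<open>2\<^sup>k\<close> rectangles (\<open>disj_bound\<close>).  "The prime \<open>p\<close> divides the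
    intersection size" needs \<open>p\<close> to the power \<open>\<Omega>(k)\<close> rectangles: orthogonal rectangles in \<open>\<int>\<^sub>p\<^sup>t\<close> have at most \<open>p\<^sup>t\<close>
    elements (\<open>orth_rect_bound\<close>), and a unary grid encoding turns inner products into
    intersection sizes (\<open>ip_to_bits\<close>).
  \<^item> A gadget in \<open>M\<close> consists of fixed-length blocks for Alice and Bob whose interleaved
    product lies in an order ideal iff a predicate holds of the intersection size.  Gadgets for
    the two problems above give \<open>N1_mon M \<in> \<Omega>(n)\<close> (\<open>hard_gadget_omega\<close>); by repeating blocks, a
    gadget for divisibility by any \<open>m \<noteq> 1\<close> suffices (\<open>modular_gadget_hard\<close>).
  \<^item> Gadgets lift along division of ordered monoids (\<open>hard_gadget_divides\<close>).
  \<^item> Gadgets exist in \<open>BA\<^sub>2\<^sup>+\<close> and \<open>U\<^sup>+\<close> (words avoiding \<open>aa\<close>), in non-commutative finite groups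
    (commutators; stable orders on finite groups are trivial) and in \<open>T\<^sub>q\<close> monoids (the cyclic
    group of order \<open>q\<close> generated by \<open>e f e\<close> below \<open>e\<close>).
\<close>

text \<open>The multiset ordering constant of the same name would shadow the
  record field of ordered monoids.\<close>
hide_const (open) Multiset.mult

context
  fixes M :: "'m omonoid"
  assumes OM: "ordered_monoid M"
begin

lemma ordered_monoid_axioms:
  "unit M \<in> carrier M"
  "\<forall>x\<in>carrier M. \<forall>y\<in>carrier M. mult M x y \<in> carrier M"
  "\<forall>x\<in>carrier M. \<forall>y\<in>carrier M. \<forall>z\<in>carrier M.
        mult M (mult M x y) z = mult M x (mult M y z)"
  "\<forall>x\<in>carrier M. mult M (unit M) x = x \<and> mult M x (unit M) = x"
  "\<forall>x\<in>carrier M. le M x x"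
  "\<forall>x\<in>carrier M. \<forall>y\<in>carrier M. le M x y \<and> le M y x \<longrightarrow> x = y"
  "\<forall>x\<in>carrier M. \<forall>y\<in>carrier M. \<forall>z\<in>carrier M. le M x y \<and> le M y z \<longrightarrow> le M x z"
  "\<forall>x\<in>carrier M. \<forall>y\<in>carrier M. \<forall>z\<in>carrier M.
        le M x y \<longrightarrow> le M (mult M z x) (mult M z y) \<and> le M (mult M x z) (mult M y z)"
  by (insert OM, unfold ordered_monoid_def, (elim conjE, assumption)+)

lemma om_unit: "unit M \<in> carrier M"
  using ordered_monoid_axioms(1) .

lemma om_closed: "x \<in> carrier M \<Longrightarrow> y \<in> carrier M \<Longrightarrow> mult M x y \<in> carrier M"
  using ordered_monoid_axioms(2) by blast

lemma om_assoc: "x \<in> carrier M \<Longrightarrow> y \<in> carrier M \<Longrightarrow> z \<in> carrier M \<Longrightarrow>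
   mult M (mult M x y) z = mult M x (mult M y z)"
  using ordered_monoid_axioms(3) by blast

lemma om_lunit: "x \<in> carrier M \<Longrightarrow> mult M (unit M) x = x"
  using ordered_monoid_axioms(4) by blast

lemma om_runit: "x \<in> carrier M \<Longrightarrow> mult M x (unit M) = x"
  using ordered_monoid_axioms(4) by blast

lemma om_refl: "x \<in> carrier M \<Longrightarrow> le M x x"
  using ordered_monoid_axioms(5) by blast

lemma om_antisym: "x \<in> carrier M \<Longrightarrow> y \<in> carrier M \<Longrightarrow> le M x y \<Longrightarrow> le M y x \<Longrightarrow> x = y"
  using ordered_monoid_axioms(6) by blast

lemma om_trans: "x \<in> carrier M \<Longrightarrow> y \<in> carrier M \<Longrightarrow> z \<in> carrier M \<Longrightarrow>
   le M x y \<Longrightarrow> le M y z \<Longrightarrow> le M x z"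
  using ordered_monoid_axioms(7) by blast

lemma om_monoL: "x \<in> carrier M \<Longrightarrow> y \<in> carrier M \<Longrightarrow> z \<in> carrier M \<Longrightarrow>
   le M x y \<Longrightarrow> le M (mult M z x) (mult M z y)"
  using ordered_monoid_axioms(8) by blast

lemma om_monoR: "x \<in> carrier M \<Longrightarrow> y \<in> carrier M \<Longrightarrow> z \<in> carrier M \<Longrightarrow>
   le M x y \<Longrightarrow> le M (mult M x z) (mult M y z)"
  using ordered_monoid_axioms(8) by blast

lemma opow_closed: "x \<in> carrier M \<Longrightarrow> opow M x n \<in> carrier M"
  by (induction n) (auto simp: om_unit om_closed)

lemma opow_add: "x \<in> carrier M \<Longrightarrow> opow M x (m + n) = mult M (opow M x m) (opow M x n)"
  by (induction m) (auto simp: om_lunit opow_closed om_assoc)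

lemma opow_mult: "x \<in> carrier M \<Longrightarrow> opow M x (m * n) = opow M (opow M x m) n"
  by (induction n) (simp_all add: opow_add)

lemma opow_Suc2: "x \<in> carrier M \<Longrightarrow> opow M x (Suc n) = mult M (opow M x n) x"
  using opow_add[of x n 1] by (simp add: om_runit)

lemma opow_unit: "opow M (unit M) n = unit M"
  by (induction n) (auto simp: om_lunit om_unit)

lemma lprod_Cons: "lprod M (x # xs) = mult M x (lprod M xs)"
  by (simp add: lprod_def)

lemma lprod_closed: "set xs \<subseteq> carrier M \<Longrightarrow> lprod M xs \<in> carrier M"
  by (induction xs) (auto simp: lprod_def om_unit om_closed)

lemma lprod_append: "set xs \<subseteq> carrier M \<Longrightarrow> set ys \<subseteq> carrier M \<Longrightarrow>
   lprod M (xs @ ys) = mult M (lprod M xs) (lprod M ys)"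
proof (induction xs)
  case Nil
  then show ?case by (simp add: lprod_def om_lunit lprod_closed[unfolded lprod_def])
next
  case (Cons x xs)
  then show ?case using lprod_closed[of xs] lprod_closed[of ys] by (simp add: lprod_Cons om_assoc)
qed

lemma lprod_concat_replicate: "set xs \<subseteq> carrier M \<Longrightarrow>
   lprod M (concat (replicate r xs)) = opow M (lprod M xs) r"
proof (induction r)
  case (Suc r)
  have "set (concat (replicate r xs)) \<subseteq> carrier M" using Suc.prems by auto
  then show ?case using Suc by (simp add: lprod_append)
qed (simp add: lprod_def)

lemma lprod_all_unit: "set xs \<subseteq> {unit M} \<Longrightarrow> lprod M xs = unit M"
  by (induction xs) (auto simp: lprod_def om_unit om_lunit)

end

lemma interleave_append: "length xs1 = length ys1 \<Longrightarrow>
  interleave (xs1 @ xs2) (ys1 @ ys2) = interleave xs1 ys1 @ interleave xs2 ys2"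
  by (simp add: interleave_def zip_append)

lemma interleave_set: "set (interleave xs ys) \<subseteq> set xs \<union> set ys"
  unfolding interleave_def by (auto dest: set_zip_leftD set_zip_rightD)

lemma interleave_concat_map:
  assumes "length us = length vs" "\<And>u. length (A u) = L" "\<And>v. length (B v) = L"
  shows "interleave (concat (map A us)) (concat (map B vs)) =
         concat (map (\<lambda>(u, v). interleave (A u) (B v)) (zip us vs))"
  using assms(1) by (induction us vs rule: list_induct2) (simp_all add: interleave_def interleave_append assms)

lemma interleave_replicate:
  assumes "length xs = length ys"
  shows "interleave (concat (replicate r xs)) (concat (replicate r ys)) =
         concat (replicate r (interleave xs ys))"
  by (induction r) (auto simp: interleave_def interleave_append[unfolded interleave_def] assms)

lemma interleave_map: "length xs = length ys \<Longrightarrow>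
  interleave (map h xs) (map h ys) = map h (interleave xs ys)"
  by (induction xs ys rule: list_induct2) (auto simp: interleave_def)

section \<open>Rectangle covers\<close>

definition is_cover ::
  "'x set \<Rightarrow> 'y set \<Rightarrow> ('x \<Rightarrow> 'y \<Rightarrow> bool) \<Rightarrow> nat \<Rightarrow> (nat \<Rightarrow> 'x set \<times> 'y set) \<Rightarrow> bool" where
  "is_cover X Y f k R \<longleftrightarrow>
     (\<forall>i<k. fst (R i) \<subseteq> X \<and> snd (R i) \<subseteq> Y \<and> (\<forall>x\<in>fst (R i). \<forall>y\<in>snd (R i). f x y)) \<and>
     {(x, y). x \<in> X \<and> y \<in> Y \<and> f x y} = (\<Union>i<k. fst (R i) \<times> snd (R i))"

lemma cover_num_alt: "cover_num X Y f = (LEAST k. \<exists>R. is_cover X Y f k R)"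
  unfolding cover_num_def is_cover_def by simp

text \<open>On finite inputs the 1-inputs themselves, as singleton rectangles, form a cover.\<close>
lemma cover_exists:
  assumes "finite X" "finite Y"
  shows "\<exists>k R. is_cover X Y f k R"
proof -
  have "finite {(x, y). x \<in> X \<and> y \<in> Y \<and> f x y}"
    by (rule finite_subset[of _ "X \<times> Y"]) (use assms in auto)
  then obtain zs where zs: "set zs = {(x, y). x \<in> X \<and> y \<in> Y \<and> f x y}"
    using finite_list by blast
  define R where "R i = ({fst (zs ! i)}, {snd (zs ! i)})" for i
  have "is_cover X Y f (length zs) R"
    unfolding is_cover_def
  proof (intro conjI allI impI)
    fix i assume "i < length zs"
    then have "zs ! i \<in> set zs" by simp
    then show "fst (R i) \<subseteq> X" "snd (R i) \<subseteq> Y" "\<forall>x\<in>fst (R i). \<forall>y\<in>snd (R i). f x y"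
      unfolding R_def zs by auto
  next
    have "fst (R i) \<times> snd (R i) = {zs ! i}" for i by (simp add: R_def)
    then show "{(x, y). x \<in> X \<and> y \<in> Y \<and> f x y} = (\<Union>i<length zs. fst (R i) \<times> snd (R i))"
      by (simp add: zs[symmetric] set_conv_nth) blast
  qed
  then show ?thesis by blast
qed

lemma cover_num_is_cover:
  assumes "finite X" "finite Y"
  shows "\<exists>R. is_cover X Y f (cover_num X Y f) R"
proof -
  obtain k R where "is_cover X Y f k R" using cover_exists[OF assms] by blast
  then have "\<exists>R. is_cover X Y f (LEAST k. \<exists>R. is_cover X Y f k R) R"
    using LeastI_ex[where P = "\<lambda>k. \<exists>R. is_cover X Y f k R"] by blast
  then show ?thesis unfolding cover_num_alt .
qed

lemma cover_num_le: "is_cover X Y f k R \<Longrightarrow> cover_num X Y f \<le> k"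
  unfolding cover_num_alt by (auto intro: Least_le)

lemma cover_reduction:
  assumes fin: "finite X'" "finite Y'"
    and encA: "\<And>x. x \<in> X \<Longrightarrow> eA x \<in> X'"
    and encB: "\<And>y. y \<in> Y \<Longrightarrow> eB y \<in> Y'"
    and eq: "\<And>x y. x \<in> X \<Longrightarrow> y \<in> Y \<Longrightarrow> f' (eA x) (eB y) = f x y"
  shows "cover_num X Y f \<le> cover_num X' Y' f'"
proof -
  define k where "k = cover_num X' Y' f'"
  obtain R' where R': "is_cover X' Y' f' k R'"
    using cover_num_is_cover[OF fin] unfolding k_def by blast
  have rect': "\<forall>x\<in>fst (R' i). \<forall>y\<in>snd (R' i). f' x y" if "i < k" for i
    using R' that unfolding is_cover_def by blast
  have U': "(\<Union>i<k. fst (R' i) \<times> snd (R' i)) = {(x, y). x \<in> X' \<and> y \<in> Y' \<and> f' x y}"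
    using R' unfolding is_cover_def by simp
  have union': "(eA x, eB y) \<in> (\<Union>i<k. fst (R' i) \<times> snd (R' i)) \<longleftrightarrow> f x y"
    if "x \<in> X" "y \<in> Y" for x y
    unfolding U' using that encA encB eq by simp
  define R where "R i = ({x \<in> X. eA x \<in> fst (R' i)}, {y \<in> Y. eB y \<in> snd (R' i)})" for i
  have "is_cover X Y f k R"
    unfolding is_cover_def
  proof (intro conjI allI impI)
    fix i assume "i < k"
    then show "fst (R i) \<subseteq> X" "snd (R i) \<subseteq> Y" "\<forall>x\<in>fst (R i). \<forall>y\<in>snd (R i). f x y"
      using rect'[of i] eq unfolding R_def by auto
  next
    show "{(x, y). x \<in> X \<and> y \<in> Y \<and> f x y} = (\<Union>i<k. fst (R i) \<times> snd (R i))"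
      using union' unfolding R_def by auto
  qed
  then show ?thesis unfolding k_def by (rule cover_num_le)
qed

lemma cover_counting:
  assumes fin: "finite X" "finite Y"
    and W: "W \<subseteq> {(x, y). x \<in> X \<and> y \<in> Y \<and> f x y}"
    and rect: "\<And>S T. S \<subseteq> X \<Longrightarrow> T \<subseteq> Y \<Longrightarrow> (\<forall>x\<in>S. \<forall>y\<in>T. f x y) \<Longrightarrow> card (W \<inter> (S \<times> T)) \<le> K"
  shows "card W \<le> K * cover_num X Y f"
proof -
  define k where "k = cover_num X Y f"
  obtain R where R: "is_cover X Y f k R"
    using cover_num_is_cover[OF fin] unfolding k_def by blast
  have "W \<subseteq> (\<Union>i<k. fst (R i) \<times> snd (R i))"
    using W R unfolding is_cover_def by simp
  then have "W = (\<Union>i<k. W \<inter> (fst (R i) \<times> snd (R i)))"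
    by blast
  then have "card W \<le> (\<Sum>i<k. card (W \<inter> (fst (R i) \<times> snd (R i))))"
    by (metis card_UN_le finite_lessThan)
  also have "\<dots> \<le> (\<Sum>i<k. K)"
    using R rect unfolding is_cover_def by (intro sum_mono) auto
  finally show ?thesis by (simp add: k_def mult.commute)
qed

section \<open>Two hard problems on bit strings\<close>

text \<open>Inputs are bit strings of length \<open>k\<close>, read as subsets of \<open>{0..<k}\<close>;
  \<open>cnt us vs\<close> is the size of the intersection.\<close>

definition BITS :: "nat \<Rightarrow> bool list set" where
  "BITS k = {us. length us = k}"

definition cnt :: "bool list \<Rightarrow> bool list \<Rightarrow> nat" where
  "cnt us vs = length (filter (\<lambda>(u, v). u \<and> v) (zip us vs))"

lemma BITS_lists: "BITS k = {xs. set xs \<subseteq> UNIV \<and> length xs = k}"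
  unfolding BITS_def by simp

lemma BITS_finite: "finite (BITS k)"
  unfolding BITS_lists by (rule finite_lists_length_eq) simp

lemma BITS_card: "card (BITS k) = 2 ^ k"
  unfolding BITS_lists using card_lists_length_eq[of "UNIV :: bool set" k] by simp

lemma cnt_append: "length xs1 = length ys1 \<Longrightarrow> cnt (xs1 @ xs2) (ys1 @ ys2) = cnt xs1 ys1 + cnt xs2 ys2"
  by (simp add: cnt_def zip_append)

lemma cnt_Cons[simp]: "cnt (x # xs) (y # ys) = (if x \<and> y then 1 else 0) + cnt xs ys"
  by (simp add: cnt_def)

lemma cnt_Nil[simp]: "cnt [] ys = 0"
  by (simp add: cnt_def)

lemma cnt_Nil2[simp]: "cnt xs [] = 0"
  by (simp add: cnt_def)

lemma cnt_zero_iff: "length us = length vs \<Longrightarrow> cnt us vs = 0 \<longleftrightarrow> (\<forall>i<length us. \<not> (us ! i \<and> vs ! i))"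
  by (induction us vs rule: list_induct2) (auto simp: nth_Cons split: nat.splits)

lemma cnt_replicate_False: "cnt (replicate n False) ys = 0"
proof (induction n arbitrary: ys)
  case (Suc n) then show ?case by (cases ys) auto
qed simp

text \<open>The pairs \<open>(s, complement of s)\<close> form a fooling set of size \<open>2 ^ k\<close> for
  disjointness: two of them in one 1-rectangle would force \<open>s\<^sub>1 = s\<^sub>2\<close>.\<close>
lemma disj_bound: "2 ^ k \<le> cover_num (BITS k) (BITS k) (\<lambda>us vs. cnt us vs = 0)"
proof -
  define W where "W = (\<lambda>s. (s, map Not s)) ` BITS k"
  have "card W = 2 ^ k" unfolding W_def
    by (subst card_image) (auto simp: inj_on_def BITS_card)
  moreover have "card W \<le> 1 * cover_num (BITS k) (BITS k) (\<lambda>us vs. cnt us vs = 0)"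
  proof (rule cover_counting[OF BITS_finite BITS_finite])
    show "W \<subseteq> {(x, y). x \<in> BITS k \<and> y \<in> BITS k \<and> cnt x y = 0}"
    proof
      fix z assume "z \<in> W"
      then obtain s where s: "s \<in> BITS k" "z = (s, map Not s)" unfolding W_def by blast
      have "cnt s (map Not s) = 0" using cnt_zero_iff[of s "map Not s"] by simp
      then show "z \<in> {(x, y). x \<in> BITS k \<and> y \<in> BITS k \<and> cnt x y = 0}"
        using s by (simp add: BITS_def)
    qed
  next
    fix S T assume ST: "S \<subseteq> BITS k" "T \<subseteq> BITS k" "\<forall>x\<in>S. \<forall>y\<in>T. cnt x y = 0"
    have same: "s1 = s2" if "s1 \<in> S" "map Not s1 \<in> T" "s2 \<in> S" "map Not s2 \<in> T" for s1 s2
    proof (rule nth_equalityI)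
      have c: "cnt s1 (map Not s2) = 0" "cnt s2 (map Not s1) = 0" using ST(3) that by auto
      have len: "length s1 = k" "length s2 = k" using ST(1) that by (auto simp: BITS_def)
      then show "length s1 = length s2" by simp
      fix i assume "i < length s1"
      then have "\<not> (s1 ! i \<and> \<not> s2 ! i)"
        using c(1) cnt_zero_iff[of s1 "map Not s2"] len by simp
      moreover have "\<not> (s2 ! i \<and> \<not> s1 ! i)"
        using c(2) cnt_zero_iff[of s2 "map Not s1"] \<open>i < length s1\<close> len by simp
      ultimately show "s1 ! i = s2 ! i" by blast
    qed
    have "\<forall>z1\<in>W \<inter> S \<times> T. \<forall>z2\<in>W \<inter> S \<times> T. z1 = z2"
    proof (intro ballI)
      fix z1 z2 assume zW: "z1 \<in> W \<inter> S \<times> T" "z2 \<in> W \<inter> S \<times> T"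
      obtain s1 s2 where z: "z1 = (s1, map Not s1)" "z2 = (s2, map Not s2)"
        using zW unfolding W_def by blast
      have "s1 = s2" using zW z by (intro same) auto
      then show "z1 = z2" using z by simp
    qed
    moreover have fin: "finite (W \<inter> S \<times> T)"
      using BITS_finite ST by (meson finite_Int finite_SigmaI finite_subset)
    ultimately show "card (W \<inter> S \<times> T) \<le> 1" using card_le_Suc0_iff_eq[OF fin] by simp
  qed
  ultimately show ?thesis by simp
qed

text \<open>Vectors of length \<open>t\<close> over \<open>{0..<p}\<close>, standing for \<open>\<int>\<^sub>p\<^sup>t\<close>, and their integer inner product.\<close>

definition vecs :: "int \<Rightarrow> nat \<Rightarrow> int list set" where
  "vecs p t = {xs. set xs \<subseteq> {0..<p} \<and> length xs = t}"

definition ip :: "int list \<Rightarrow> int list \<Rightarrow> int" where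
  "ip xs ys = sum_list (map2 (*) xs ys)"

definition orth :: "int \<Rightarrow> int list set \<Rightarrow> int list set \<Rightarrow> bool" where
  "orth p S T \<longleftrightarrow> (\<forall>s\<in>S. \<forall>u\<in>T. p dvd ip s u)"

lemma ip_Cons[simp]: "ip (x # xs) (y # ys) = x * y + ip xs ys"
  by (simp add: ip_def)

lemma ip_Nil[simp]: "ip [] ys = 0"
  by (simp add: ip_def)

lemma ip_Nil2[simp]: "ip xs [] = 0"
  by (simp add: ip_def)

lemma ip_commute: "ip xs ys = ip ys xs"
proof (induction xs arbitrary: ys)
  case (Cons x xs) then show ?case by (cases ys) (simp_all add: ip_def)
qed (simp add: ip_def)

lemma orth_commute: "orth p S T \<Longrightarrow> orth p T S"
  unfolding orth_def using ip_commute by metis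

lemma vecs_finite: "finite (vecs p t)"
  unfolding vecs_def using finite_lists_length_eq[of "{0..<p}" t] by simp

lemma vecs_card: "card (vecs p t) = nat p ^ t"
  unfolding vecs_def by (subst card_lists_length_eq) auto

lemma vecs_Suc: "xs \<in> vecs p (Suc t) \<longleftrightarrow> (\<exists>x ys. xs = x # ys \<and> 0 \<le> x \<and> x < p \<and> ys \<in> vecs p t)"
  unfolding vecs_def by (cases xs) auto

lemma vecs_SucD:
  assumes "xs \<in> vecs p (Suc t)"
  shows "xs = hd xs # tl xs" "tl xs \<in> vecs p t" "0 \<le> hd xs" "hd xs < p"
  using assms by (auto simp: vecs_Suc)

lemma residue_eqI:
  fixes a b p :: int
  assumes "0 \<le> a" "a < p" "0 \<le> b" "b < p" "p dvd a - b"
  shows "a = b"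
proof -
  have "a mod p = b mod p" using assms(5) by (simp add: mod_eq_dvd_iff)
  then show ?thesis using assms(1-4) by simp
qed

lemma ip_diff_dvd:
  assumes "length ys = length zs"
  shows "p dvd ip xs (map2 (\<lambda>a b. (a - b) mod p) ys zs) - (ip xs ys - ip xs zs)"
  using assms
proof (induction ys zs arbitrary: xs rule: list_induct2)
  case (Cons y ys z zs)
  show ?case
  proof (cases xs)
    case (Cons x xs')
    have "ip xs (map2 (\<lambda>a b. (a - b) mod p) (y # ys) (z # zs)) - (ip xs (y # ys) - ip xs (z # zs))
        = x * ((y - z) mod p - (y - z))
          + (ip xs' (map2 (\<lambda>a b. (a - b) mod p) ys zs) - (ip xs' ys - ip xs' zs))"
      by (simp add: Cons algebra_simps)
    moreover have "p dvd (y - z) mod p - (y - z)"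
      by (simp add: mod_eq_dvd_iff[symmetric])
    ultimately show ?thesis using Cons.IH[of xs'] by simp
  qed simp
qed simp

text \<open>Fix \<open>w\<close>. Translating the tails of the vectors \<open>u\<close> with the same first coordinate as \<open>w\<close>
  by \<open>-tl w\<close> preserves orthogonality (to the tails of a set orthogonal to \<open>u\<close> and \<open>w\<close>) and is
  injective.  This is the step that drops one dimension.\<close>
definition shift :: "int \<Rightarrow> int list \<Rightarrow> int list \<Rightarrow> int list" where
  "shift p w u = map2 (\<lambda>a b. (a - b) mod p) (tl u) (tl w)"

lemma shift_vecs:
  assumes "p > 0" "u \<in> vecs p (Suc t)" "w \<in> vecs p (Suc t)"
  shows "shift p w u \<in> vecs p t"
proof -
  have "length (tl u) = t" "length (tl w) = t"
    using vecs_SucD(2)[OF assms(2)] vecs_SucD(2)[OF assms(3)] by (simp_all add: vecs_def)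
  moreover have "set (shift p w u) \<subseteq> {0..<p}"
    unfolding shift_def using assms(1) by auto
  ultimately show ?thesis unfolding vecs_def shift_def by simp
qed

lemma shift_inj:
  assumes "u \<in> vecs p (Suc t)" "v \<in> vecs p (Suc t)" "w \<in> vecs p (Suc t)"
    and "hd u = hd v" and "shift p w u = shift p w v"
  shows "u = v"
proof -
  note tails = vecs_SucD(2)[OF assms(1)] vecs_SucD(2)[OF assms(2)] vecs_SucD(2)[OF assms(3)]
  have "tl u = tl v"
  proof (rule nth_equalityI)
    show len: "length (tl u) = length (tl v)" using tails by (simp add: vecs_def)
    fix i assume i: "i < length (tl u)"
    have "(tl u ! i - tl w ! i) mod p = (tl v ! i - tl w ! i) mod p"
      using arg_cong[OF assms(5), of "\<lambda>xs. xs ! i"] i len tails by (simp add: shift_def vecs_def)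
    then have "p dvd tl u ! i - tl v ! i" by (simp add: mod_eq_dvd_iff)
    moreover have "tl u ! i \<in> set (tl u)" "tl v ! i \<in> set (tl v)" using i len by simp_all
    then have "tl u ! i \<in> {0..<p}" "tl v ! i \<in> {0..<p}"
      using tails unfolding vecs_def by blast+
    ultimately show "tl u ! i = tl v ! i" by (intro residue_eqI) auto
  qed
  then show ?thesis using assms(4) vecs_SucD(1)[OF assms(1)] vecs_SucD(1)[OF assms(2)] by metis
qed

lemma orth_shift:
  assumes "s \<in> vecs p (Suc t)" "u \<in> vecs p (Suc t)" "w \<in> vecs p (Suc t)"
    and "hd u = hd w" and "p dvd ip s u" "p dvd ip s w"
  shows "p dvd ip (tl s) (shift p w u)"
proof -
  have ip_split: "ip s x = hd s * hd x + ip (tl s) (tl x)" if "x \<in> vecs p (Suc t)" for x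
    using vecs_SucD(1)[OF assms(1)] vecs_SucD(1)[OF that] by (metis ip_Cons)
  have "length (tl u) = length (tl w)"
    using vecs_SucD(2)[OF assms(2)] vecs_SucD(2)[OF assms(3)] by (simp add: vecs_def)
  then have "p dvd ip (tl s) (shift p w u) - (ip (tl s) (tl u) - ip (tl s) (tl w))"
    unfolding shift_def by (rule ip_diff_dvd)
  moreover have "ip (tl s) (tl u) - ip (tl s) (tl w) = ip s u - ip s w"
    using ip_split[OF assms(2)] ip_split[OF assms(3)] assms(4) by simp
  moreover have "p dvd ip s u - ip s w" using assms(5,6) by simp
  ultimately show ?thesis by (metis dvd_diff diff_add_cancel dvd_add)
qed

lemma card_le_sum_fibers:
  assumes "finite B" "f ` A \<subseteq> B"
  shows "card A \<le> (\<Sum>c\<in>B. card {x \<in> A. f x = c})"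
proof -
  have "A = (\<Union>c\<in>B. {x \<in> A. f x = c})" using assms(2) by blast
  then have "card A = card (\<Union>c\<in>B. {x \<in> A. f x = c})" by simp
  also have "\<dots> \<le> (\<Sum>c\<in>B. card {x \<in> A. f x = c})" using card_UN_le[OF assms(1)] by blast
  finally show ?thesis .
qed

text \<open>Inductive step of the rectangle bound, when the tails of \<open>S\<close> are distinct: splitting \<open>T\<close>
  by its first coordinate, each of the \<open>p\<close> parts gives a rectangle in dimension \<open>t\<close>.\<close>
lemma orth_rect_step:
  fixes p :: int
  assumes p: "prime p"
    and S: "S \<subseteq> vecs p (Suc t)" and T: "T \<subseteq> vecs p (Suc t)" and ST: "orth p S T"
    and injS: "inj_on tl S"
    and IH: "\<And>S' T'. S' \<subseteq> vecs p t \<Longrightarrow> T' \<subseteq> vecs p t \<Longrightarrow> orth p S' T' \<Longrightarrow>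
               card S' * card T' \<le> nat p ^ t"
  shows "card S * card T \<le> nat p ^ Suc t"
proof -
  have p0: "p > 0" using prime_gt_0_int[OF p] .
  have fiber: "card S * card {u \<in> T. hd u = c} \<le> nat p ^ t" for c
  proof (cases "{u \<in> T. hd u = c} = {}")
    case False
    then obtain w where w: "w \<in> T" "hd w = c" by blast
    define Tc where "Tc = {u \<in> T. hd u = c}"
    have "card (tl ` S) * card (shift p w ` Tc) \<le> nat p ^ t"
    proof (rule IH)
      show "tl ` S \<subseteq> vecs p t" using S vecs_SucD(2) by blast
      show "shift p w ` Tc \<subseteq> vecs p t" using T w shift_vecs[OF p0] unfolding Tc_def by blast
      show "orth p (tl ` S) (shift p w ` Tc)"
        unfolding orth_def
      proof (intro ballI)
        fix s' u' assume "s' \<in> tl ` S" "u' \<in> shift p w ` Tc"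
        then obtain s u where su: "s \<in> S" "u \<in> Tc" "s' = tl s" "u' = shift p w u" by blast
        have "u \<in> T" "hd u = hd w" using su(2) w unfolding Tc_def by simp_all
        then show "p dvd ip s' u'"
          using orth_shift[of s p t u w] su S T w ST unfolding orth_def by blast
      qed
    qed
    moreover have "inj_on (shift p w) Tc"
    proof (rule inj_onI)
      fix u v assume uv: "u \<in> Tc" "v \<in> Tc" "shift p w u = shift p w v"
      then have "u \<in> vecs p (Suc t)" "v \<in> vecs p (Suc t)" "hd u = hd v"
        using T unfolding Tc_def by auto
      then show "u = v" using shift_inj uv(3) T w(1) by blast
    qed
    ultimately show ?thesis using injS by (simp add: card_image Tc_def)
  next
    case True
    then show ?thesis by (simp only: card.empty)
  qed
  have "hd u \<in> {0..<p}" if "u \<in> T" for u using that T vecs_SucD(3,4) by auto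
  then have "hd ` T \<subseteq> {0..<p}" by blast
  then have "card S * card T \<le> card S * (\<Sum>c\<in>{0..<p}. card {u \<in> T. hd u = c})"
    using card_le_sum_fibers[of "{0..<p}" hd T] by simp
  also have "\<dots> = (\<Sum>c\<in>{0..<p}. card S * card {u \<in> T. hd u = c})"
    by (simp add: sum_distrib_left)
  also have "\<dots> \<le> (\<Sum>c\<in>{0..<p}. nat p ^ t)"
    using fiber by (rule sum_mono)
  also have "\<dots> = nat p ^ Suc t" using p0 by simp
  finally show ?thesis .
qed

text \<open>If two vectors of \<open>S\<close> differ only in the first coordinate, orthogonality forces every
  vector of \<open>T\<close> to have first coordinate \<open>0\<close>; then the tails of \<open>T\<close> are distinct.\<close>
lemma orth_tl_inj:
  fixes p :: int
  assumes p: "prime p"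
    and S: "S \<subseteq> vecs p (Suc t)" and T: "T \<subseteq> vecs p (Suc t)" and ST: "orth p S T"
    and not_inj: "\<not> inj_on tl S"
  shows "inj_on tl T"
proof -
  obtain s s' where ss: "s \<in> S" "s' \<in> S" "tl s = tl s'" "s \<noteq> s'"
    using not_inj unfolding inj_on_def by blast
  have Vs: "s \<in> vecs p (Suc t)" "s' \<in> vecs p (Suc t)" using ss S by auto
  have hd_ne: "hd s \<noteq> hd s'"
    using ss vecs_SucD(1)[OF Vs(1)] vecs_SucD(1)[OF Vs(2)] by auto
  have hd0: "hd u = 0" if u: "u \<in> T" for u
  proof -
    have V: "s \<in> vecs p (Suc t)" "s' \<in> vecs p (Suc t)" "u \<in> vecs p (Suc t)"
      using ss u S T by auto
    have "ip s u = hd s * hd u + ip (tl s) (tl u)" "ip s' u = hd s' * hd u + ip (tl s') (tl u)"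
      using vecs_SucD(1)[OF V(1)] vecs_SucD(1)[OF V(2)] vecs_SucD(1)[OF V(3)] ip_Cons by metis+
    then have "ip s u - ip s' u = (hd s - hd s') * hd u"
      using ss(3) by (simp add: algebra_simps)
    moreover have "p dvd ip s u - ip s' u" using ST ss u unfolding orth_def by simp
    ultimately have "p dvd (hd s - hd s') * hd u" by simp
    moreover have "\<not> p dvd hd s - hd s'"
      using hd_ne residue_eqI[of "hd s" p "hd s'"] vecs_SucD(3,4)[OF Vs(1)] vecs_SucD(3,4)[OF Vs(2)]
      by blast
    ultimately have "p dvd hd u" by (simp add: prime_dvd_mult_iff[OF p])
    then show ?thesis
      using residue_eqI[of "hd u" p 0] vecs_SucD(3,4)[OF V(3)] prime_gt_0_int[OF p] by simp
  qed
  show ?thesis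
  proof (rule inj_onI)
    fix u v assume uv: "u \<in> T" "v \<in> T" "tl u = tl v"
    then have "u \<in> vecs p (Suc t)" "v \<in> vecs p (Suc t)" using T by auto
    then have "u = hd u # tl u" "v = hd v # tl v" using vecs_SucD(1) by blast+
    then show "u = v" using uv hd0 by metis
  qed
qed

lemma orth_rect_bound:
  fixes p :: int
  assumes p: "prime p"
  shows "S \<subseteq> vecs p t \<Longrightarrow> T \<subseteq> vecs p t \<Longrightarrow> orth p S T \<Longrightarrow> card S * card T \<le> nat p ^ t"
proof (induction t arbitrary: S T)
  case 0
  have "vecs p 0 = {[]}" unfolding vecs_def by auto
  then have "card S \<le> 1" "card T \<le> 1" using 0 by (auto intro: card_mono[of "{[]}", simplified])
  then show ?case using mult_le_mono[of "card S" 1 "card T" 1] by simp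
next
  case (Suc t)
  show ?case
  proof (cases "inj_on tl S")
    case True
    then show ?thesis using orth_rect_step[OF p Suc.prems] Suc.IH by blast
  next
    case False
    then have "inj_on tl T" using orth_tl_inj[OF p Suc.prems] by blast
    then have "card T * card S \<le> nat p ^ Suc t"
      using orth_rect_step[OF p Suc.prems(2,1) orth_commute[OF Suc.prems(3)]] Suc.IH by blast
    then show ?thesis by (simp add: mult.commute)
  qed
qed

text \<open>Fooling set: all pairs \<open>(1 # a, c # b)\<close> where \<open>c\<close> makes the inner product vanish; there
  are \<open>p ^ (2 t)\<close> of them and each orthogonal rectangle contains at most \<open>p ^ (t + 1)\<close>.\<close>
lemma ip_cover:
  fixes p :: int
  assumes p: "prime p"
  shows "nat p ^ (2 * t) \<le> nat p ^ Suc t * cover_num (vecs p (Suc t)) (vecs p (Suc t)) (\<lambda>a b. p dvd ip a b)"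
proof -
  have p1: "p > 1" using p prime_gt_1_int by blast
  define F where "F = (\<lambda>(a, b). (1 # a, ((- ip a b) mod p) # b))"
  define W where "W = F ` (vecs p t \<times> vecs p t)"
  have injF: "inj_on F (vecs p t \<times> vecs p t)" unfolding F_def inj_on_def by auto
  have "card W = nat p ^ (2 * t)" unfolding W_def
    by (simp add: card_image[OF injF] card_cartesian_product vecs_card mult_2 power_add)
  moreover have "card W \<le> nat p ^ Suc t * cover_num (vecs p (Suc t)) (vecs p (Suc t)) (\<lambda>a b. p dvd ip a b)"
  proof (rule cover_counting[OF vecs_finite vecs_finite])
    show "W \<subseteq> {(x, y). x \<in> vecs p (Suc t) \<and> y \<in> vecs p (Suc t) \<and> p dvd ip x y}"
    proof
      fix z assume "z \<in> W"
      then obtain a b where ab: "a \<in> vecs p t" "b \<in> vecs p t" "z = F (a, b)" unfolding W_def by blast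
      have "(- ip a b) mod p + ip a b = (- ip a b) mod p - (- ip a b)" by simp
      then have "p dvd (- ip a b) mod p + ip a b"
        using dvd_minus_mod[of p "- ip a b"] by (metis dvd_minus_iff minus_diff_eq)
      moreover have "0 \<le> (- ip a b) mod p" "(- ip a b) mod p < p" using p1 by simp_all
      ultimately show "z \<in> {(x, y). x \<in> vecs p (Suc t) \<and> y \<in> vecs p (Suc t) \<and> p dvd ip x y}"
        using ab p1 unfolding F_def by (simp add: vecs_Suc)
    qed
  next
    fix S T assume ST: "S \<subseteq> vecs p (Suc t)" "T \<subseteq> vecs p (Suc t)" "\<forall>x\<in>S. \<forall>y\<in>T. p dvd ip x y"
    have "finite (S \<times> T)" using ST vecs_finite finite_subset finite_SigmaI by metis
    then have "card (W \<inter> S \<times> T) \<le> card S * card T" by (simp add: card_mono card_cartesian_product[symmetric])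
    also have "\<dots> \<le> nat p ^ Suc t" using orth_rect_bound[OF p ST(1,2)] ST(3) unfolding orth_def by blast
    finally show "card (W \<inter> S \<times> T) \<le> nat p ^ Suc t" .
  qed
  ultimately show ?thesis by simp
qed

lemma ip_cover_lower:
  fixes p :: int
  assumes p: "prime p" and t: "t \<ge> 1"
  shows "nat p ^ (t - 1) \<le> cover_num (vecs p (Suc t)) (vecs p (Suc t)) (\<lambda>a b. p dvd ip a b)"
proof -
  define c where "c = cover_num (vecs p (Suc t)) (vecs p (Suc t)) (\<lambda>a b. p dvd ip a b)"
  have "t - 1 + Suc t = 2 * t" using t by simp
  then have "nat p ^ (t - 1) * nat p ^ Suc t = nat p ^ (2 * t)"
    by (metis power_add)
  also have "\<dots> \<le> nat p ^ Suc t * c" using ip_cover[OF p, of t] unfolding c_def .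
  finally have "nat p ^ (t - 1) * nat p ^ Suc t \<le> c * nat p ^ Suc t" by (simp add: mult.commute)
  moreover have "nat p ^ Suc t > 0" using prime_gt_1_int[OF p] by simp
  ultimately show ?thesis unfolding c_def by simp
qed

text \<open>A residue \<open>x \<le> m\<close> is encoded by Alice as the \<open>m \<times> m\<close> grid whose first \<open>x\<close> rows are full, and
  by Bob as the grid whose first \<open>y\<close> columns are full; the two grids meet in \<open>x * y\<close> cells.\<close>

definition grid_rows :: "nat \<Rightarrow> int \<Rightarrow> bool list" where
  "grid_rows m x = concat (map (\<lambda>j. replicate m (int j < x)) [0..<m])"

definition grid_cols :: "nat \<Rightarrow> int \<Rightarrow> bool list" where
  "grid_cols m y = concat (replicate m (map (\<lambda>k. int k < y) [0..<m]))"

lemma length_concat_const: "(\<And>x. length (f x) = L) \<Longrightarrow> length (concat (map f xs)) = length xs * L"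
  by (induction xs) auto

lemma length_concat_replicate: "length (concat (replicate n xs)) = n * length xs"
  by (induction n) auto

lemma grid_rows_length[simp]: "length (grid_rows m x) = m * m"
  unfolding grid_rows_def by (subst length_concat_const[where L = m]) auto

lemma grid_cols_length[simp]: "length (grid_cols m y) = m * m"
  unfolding grid_cols_def by (simp add: length_concat_replicate)

lemma cnt_replicate: "length ys = n \<Longrightarrow> cnt (replicate n x) ys = (if x then length (filter (\<lambda>x. x) ys) else 0)"
  by (induction ys arbitrary: n) auto

lemma cnt_grid:
  assumes "length Q = m"
  shows "cnt (concat (map (\<lambda>j. replicate m (P j)) js)) (concat (replicate (length js) Q))
         = length (filter P js) * length (filter (\<lambda>x. x) Q)"
proof (induction js)
  case (Cons j js)
  have "cnt (concat (map (\<lambda>j. replicate m (P j)) (j # js))) (concat (replicate (length (j # js)) Q))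
      = cnt (replicate m (P j)) Q
        + cnt (concat (map (\<lambda>j. replicate m (P j)) js)) (concat (replicate (length js) Q))"
    using assms by (simp add: cnt_append)
  then show ?case using Cons cnt_replicate[OF assms] by simp
qed simp

lemma filter_upt_less: "0 \<le> x \<Longrightarrow> length (filter (\<lambda>j. int j < x) [0..<m]) = min m (nat x)"
  by (induction m) auto

lemma cnt_grid_product:
  assumes "0 \<le> x" "x \<le> int m" "0 \<le> y" "y \<le> int m"
  shows "int (cnt (grid_rows m x) (grid_cols m y)) = x * y"
proof -
  have "cnt (grid_rows m x) (grid_cols m y)
      = length (filter (\<lambda>j. int j < x) [0..<m]) * length (filter (\<lambda>x. x) (map (\<lambda>k. int k < y) [0..<m]))"
    unfolding grid_rows_def grid_cols_def
    using cnt_grid[of "map (\<lambda>k. int k < y) [0..<m]" m "\<lambda>j. int j < x" "[0..<m]"] by simp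
  also have "\<dots> = nat x * nat y"
    using filter_upt_less[of x m] filter_upt_less[of y m] assms by (simp add: filter_map comp_def)
  finally show ?thesis using assms by simp
qed

lemma cnt_grid_ip:
  assumes "length xs = length ys" "\<forall>x\<in>set xs. 0 \<le> x \<and> x \<le> int m" "\<forall>y\<in>set ys. 0 \<le> y \<and> y \<le> int m"
  shows "int (cnt (concat (map (grid_rows m) xs)) (concat (map (grid_cols m) ys))) = ip xs ys"
  using assms
proof (induction xs ys rule: list_induct2)
  case (Cons x xs y ys)
  have "cnt (concat (map (grid_rows m) (x # xs))) (concat (map (grid_cols m) (y # ys)))
      = cnt (grid_rows m x) (grid_cols m y) + cnt (concat (map (grid_rows m) xs)) (concat (map (grid_cols m) ys))"
    by (simp add: cnt_append)
  then show ?case using Cons cnt_grid_product[of x m y] by simp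
qed simp

text \<open>Hence the inner product modulo \<open>p\<close> in dimension \<open>t + 1\<close> reduces to "\<open>p\<close> divides the
  intersection size" on \<open>k \<ge> (t + 1)(p - 1)\<^sup>2\<close> bits (padding with zeros).\<close>
lemma ip_to_bits:
  fixes p :: int
  assumes p: "prime p" and k: "Suc t * (nat p - 1) * (nat p - 1) \<le> k"
  shows "cover_num (vecs p (Suc t)) (vecs p (Suc t)) (\<lambda>a b. p dvd ip a b)
       \<le> cover_num (BITS k) (BITS k) (\<lambda>us vs. p dvd int (cnt us vs))"
proof -
  define m where "m = nat p - 1"
  have pm: "p = int m + 1" unfolding m_def using prime_gt_1_int[OF p] by simp
  define N where "N = Suc t * m * m"
  define pad where "pad = replicate (k - N) False"
  define eA where "eA as = concat (map (grid_rows m) as) @ pad" for as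
  define eB where "eB bs = concat (map (grid_cols m) bs) @ pad" for bs
  have Nk: "N \<le> k" using k unfolding N_def m_def .
  have lenA: "length (concat (map (grid_rows m) as)) = N" if "length as = Suc t" for as
    using length_concat_const[of "grid_rows m" "m * m" as] that unfolding N_def by (simp add: algebra_simps)
  have lenB: "length (concat (map (grid_cols m) as)) = N" if "length as = Suc t" for as
    using length_concat_const[of "grid_cols m" "m * m" as] that unfolding N_def by (simp add: algebra_simps)
  show ?thesis
  proof (rule cover_reduction[OF BITS_finite BITS_finite])
    fix x assume "x \<in> vecs p (Suc t)"
    then show "eA x \<in> BITS k" using lenA[of x] Nk by (simp add: vecs_def eA_def BITS_def pad_def)
  next
    fix y assume "y \<in> vecs p (Suc t)"
    then show "eB y \<in> BITS k" using lenB[of y] Nk by (simp add: vecs_def eB_def BITS_def pad_def)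
  next
    fix x y assume xy: "x \<in> vecs p (Suc t)" "y \<in> vecs p (Suc t)"
    have len: "length x = Suc t" "length y = Suc t" using xy by (simp_all add: vecs_def)
    have range: "\<forall>a\<in>set x. 0 \<le> a \<and> a \<le> int m" "\<forall>b\<in>set y. 0 \<le> b \<and> b \<le> int m"
      using xy pm by (auto simp: vecs_def)
    have "cnt (eA x) (eB y) = cnt (concat (map (grid_rows m) x)) (concat (map (grid_cols m) y))"
      unfolding eA_def eB_def pad_def using lenA[of x] lenB[of y] len
      by (simp add: cnt_append cnt_replicate_False)
    then have "int (cnt (eA x) (eB y)) = ip x y" using cnt_grid_ip[OF _ range] len by simp
    then show "(p dvd int (cnt (eA x) (eB y))) = (p dvd ip x y)" by simp
  qed
qed

section \<open>Gadgets\<close>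

definition gadget ::
  "'m omonoid \<Rightarrow> 'm set \<Rightarrow> (nat \<Rightarrow> bool) \<Rightarrow> nat \<Rightarrow> (bool \<Rightarrow> 'm list) \<Rightarrow> (bool \<Rightarrow> 'm list) \<Rightarrow> bool" where
  "gadget M I P L A B \<longleftrightarrow> order_ideal M I \<and> L > 0 \<and>
     (\<forall>u. length (A u) = L \<and> length (B u) = L \<and> set (A u) \<subseteq> carrier M \<and> set (B u) \<subseteq> carrier M) \<and>
     (\<forall>ps. ps \<noteq> [] \<longrightarrow> (lprod M (concat (map (\<lambda>(u, v). interleave (A u) (B v)) ps)) \<in> I
          \<longleftrightarrow> P (length (filter (\<lambda>(u, v). u \<and> v) ps))))"

lemma gadgetD:
  assumes "gadget M I P L A B"
  shows "order_ideal M I" "L > 0"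
    "\<And>u. length (A u) = L" "\<And>u. length (B u) = L"
    "\<And>u. set (A u) \<subseteq> carrier M" "\<And>u. set (B u) \<subseteq> carrier M"
    "\<And>ps. ps \<noteq> [] \<Longrightarrow> lprod M (concat (map (\<lambda>(u, v). interleave (A u) (B v)) ps)) \<in> I
          \<longleftrightarrow> P (length (filter (\<lambda>(u, v). u \<and> v) ps))"
  using assms unfolding gadget_def by blast+

text \<open>A hard gadget is a gadget for disjointness or for divisibility of the intersection size by
  a prime; both bit problems need linearly many bits of nondeterministic communication.\<close>
definition hard_gadget :: "'m omonoid \<Rightarrow> bool" where
  "hard_gadget M \<longleftrightarrow>
     (\<exists>I L A B. gadget M I (\<lambda>c. c = 0) L A B) \<or>
     (\<exists>p I L A B. prime (p :: nat) \<and> gadget M I (\<lambda>c. p dvd c) L A B)"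

lemma inputs_finite: "finite (carrier M) \<Longrightarrow> finite (inputs M n)"
proof -
  assume "finite (carrier M)"
  moreover have "inputs M n = {xs. set xs \<subseteq> carrier M \<and> length xs = n}" unfolding inputs_def by auto
  ultimately show ?thesis using finite_lists_length_eq by simp
qed

text \<open>A gadget reduces the bit problem on \<open>k\<close> bits to the monoid problem on inputs of length
  \<open>n \<ge> k L\<close>: each party concatenates its blocks and pads with the unit.\<close>
lemma gadget_reduction:
  assumes OM: "ordered_monoid M" and fin: "finite (carrier M)"
    and G: "gadget M I P L A B" and k: "0 < k" "k * L \<le> n"
  shows "cover_num (BITS k) (BITS k) (\<lambda>us vs. P (cnt us vs))
       \<le> cover_num (inputs M n) (inputs M n) (\<lambda>xs ys. lprod M (interleave xs ys) \<in> I)"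
proof -
  note lenA = gadgetD(3)[OF G] and lenB = gadgetD(4)[OF G]
    and setA = gadgetD(5)[OF G] and setB = gadgetD(6)[OF G]
  define pad where "pad = replicate (n - k * L) (unit M)"
  define eA where "eA us = concat (map A us) @ pad" for us
  define eB where "eB vs = concat (map B vs) @ pad" for vs
  have lA: "length (concat (map A us)) = length us * L" for us by (rule length_concat_const[OF lenA])
  have lB: "length (concat (map B us)) = length us * L" for us by (rule length_concat_const[OF lenB])
  have spad: "set pad \<subseteq> {unit M}" unfolding pad_def by auto
  show ?thesis
  proof (rule cover_reduction[OF inputs_finite[OF fin] inputs_finite[OF fin]])
    fix x assume "x \<in> BITS k"
    then show "eA x \<in> inputs M n"
      using lA[of x] setA om_unit[OF OM] k by (auto simp: BITS_def eA_def inputs_def pad_def)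
  next
    fix x assume "x \<in> BITS k"
    then show "eB x \<in> inputs M n"
      using lB[of x] setB om_unit[OF OM] k by (auto simp: BITS_def eB_def inputs_def pad_def)
  next
    fix us vs assume uv: "us \<in> BITS k" "vs \<in> BITS k"
    have len: "length us = k" "length vs = k" using uv by (simp_all add: BITS_def)
    define blocks where "blocks = concat (map (\<lambda>(u, v). interleave (A u) (B v)) (zip us vs))"
    have "interleave (eA us) (eB vs) = interleave (concat (map A us)) (concat (map B vs)) @ interleave pad pad"
      unfolding eA_def eB_def using lA[of us] lB[of vs] len by (simp add: interleave_append)
    also have "interleave (concat (map A us)) (concat (map B vs)) = blocks"
      unfolding blocks_def using interleave_concat_map[of us vs A L B] len lenA lenB by simp
    finally have e: "interleave (eA us) (eB vs) = blocks @ interleave pad pad" .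
    have sbl: "set blocks \<subseteq> carrier M" unfolding blocks_def using setA setB
      by (auto dest!: set_zip_leftD set_zip_rightD subsetD[OF interleave_set])
    have spp: "set (interleave pad pad) \<subseteq> {unit M}" using interleave_set[of pad pad] spad by blast
    then have "set (interleave pad pad) \<subseteq> carrier M" using om_unit[OF OM] by blast
    then have "lprod M (interleave (eA us) (eB vs)) = mult M (lprod M blocks) (lprod M (interleave pad pad))"
      unfolding e by (rule lprod_append[OF OM sbl])
    also have "\<dots> = lprod M blocks"
      using lprod_all_unit[OF OM spp] om_runit[OF OM lprod_closed[OF OM sbl]] by simp
    finally have e2: "lprod M (interleave (eA us) (eB vs)) = lprod M blocks" .
    have "zip us vs \<noteq> []" using len k by (cases us; cases vs) auto
    then show "(lprod M (interleave (eA us) (eB vs)) \<in> I) = P (cnt us vs)"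
      unfolding e2 blocks_def cnt_def by (rule gadgetD(7)[OF G])
  qed
qed

lemma gadget_N1_bound:
  assumes OM: "ordered_monoid M" and fin: "finite (carrier M)"
    and G: "gadget M I P L A B" and k: "0 < k" "k * L \<le> n"
    and c: "1 \<le> c" "c \<le> cover_num (BITS k) (BITS k) (\<lambda>us vs. P (cnt us vs))"
  shows "log 2 (real c) \<le> N1_mon M n"
proof -
  have finI: "finite {I. order_ideal M I}"
    by (rule finite_subset[of _ "Pow (carrier M)"]) (use fin in \<open>auto simp: order_ideal_def\<close>)
  have "c \<le> cover_num (inputs M n) (inputs M n) (\<lambda>xs ys. lprod M (interleave xs ys) \<in> I)"
    using c(2) gadget_reduction[OF OM fin G k] by linarith
  then have "log 2 (real c) \<le> N1_ideal M I n"
    unfolding N1_ideal_def N1_def using c(1) by simp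
  also have "\<dots> \<le> N1_mon M n"
    unfolding N1_mon_def by (rule Max_ge) (use finI gadgetD(1)[OF G] in auto)
  finally show ?thesis .
qed

lemma omega_from_linear_bound:
  fixes f :: "nat \<Rightarrow> real"
  assumes K: "K > 0" and lb: "\<And>n. n \<ge> N \<Longrightarrow> f n \<ge> real (n div K) - D"
  shows "f \<in> \<Omega>(\<lambda>n. real n)"
proof -
  define c where "c = 1 / (2 * real K)"
  have c0: "c > 0" unfolding c_def using K by simp
  have "eventually (\<lambda>n. norm (f n) \<ge> c * norm (real n)) at_top"
    unfolding eventually_at_top_linorder
  proof (intro exI allI impI)
    fix n assume n: "n \<ge> max N (nat \<lceil>2 * real K * (\<bar>D\<bar> + 1)\<rceil>)"
    have "n = K * (n div K) + n mod K" by simp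
    moreover have "n mod K < K" using K by simp
    moreover have "K * (n div K + 1) = K * (n div K) + K" by (simp add: algebra_simps)
    ultimately have "n < K * (n div K + 1)" by linarith
    then have "real n < real (K * (n div K + 1))" by (simp only: of_nat_less_iff)
    then have "real n < real K * (real (n div K) + 1)" by (simp add: algebra_simps)
    then have "real (n div K) > real n / real K - 1" using K by (simp add: field_simps)
    then have "f n \<ge> real n / real K - 1 - \<bar>D\<bar>" using lb[of n] n by linarith
    moreover have "real n / real K - c * real n = real n / (2 * real K)"
      unfolding c_def using K by (simp add: field_simps)
    moreover have "real n \<ge> 2 * real K * (\<bar>D\<bar> + 1)" using n by linarith
    then have "real n / (2 * real K) \<ge> \<bar>D\<bar> + 1" using K by (simp add: field_simps)
    ultimately have "f n \<ge> c * real n" by linarith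
    then show "norm (f n) \<ge> c * norm (real n)" using c0 by simp
  qed
  then show ?thesis unfolding bigomega_def using c0 by blast
qed

lemma gadget_omega_disj:
  assumes OM: "ordered_monoid M" and fin: "finite (carrier M)"
    and G: "gadget M I (\<lambda>c. c = 0) L A B"
  shows "N1_mon M \<in> \<Omega>(\<lambda>n. real n)"
proof (rule omega_from_linear_bound[OF gadgetD(2)[OF G]])
  fix n assume n: "n \<ge> L"
  define k where "k = n div L"
  have k: "0 < k" "k * L \<le> n" unfolding k_def using n gadgetD(2)[OF G] by (auto simp: div_greater_zero_iff)
  have "log 2 (real ((2::nat) ^ k)) \<le> N1_mon M n"
    by (rule gadget_N1_bound[OF OM fin G k]) (simp_all add: disj_bound)
  then show "real (n div L) - 0 \<le> N1_mon M n" unfolding k_def by (simp add: log_pow_cancel)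
qed

text \<open>Modular counting gadgets give \<open>N1_mon M n \<ge> n div (L (p - 1)\<^sup>2) - 2\<close>, via the inner
  product modulo \<open>p\<close> in dimension \<open>n div (L (p - 1)\<^sup>2)\<close>.\<close>
lemma gadget_omega_mod:
  assumes OM: "ordered_monoid M" and fin: "finite (carrier M)" and p: "prime (p::nat)"
    and G: "gadget M I (\<lambda>c. p dvd c) L A B"
  shows "N1_mon M \<in> \<Omega>(\<lambda>n. real n)"
proof -
  have L: "L > 0" using gadgetD(2)[OF G] .
  have p2: "p \<ge> 2" using prime_ge_2_nat[OF p] .
  have pi: "prime (int p)" using p by simp
  define K where "K = L * (p - 1) * (p - 1)"
  have K: "K > 0" unfolding K_def using L p2 by simp
  show ?thesis
  proof (rule omega_from_linear_bound[OF K, where N = "2 * K" and D = 2])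
    fix n assume n: "n \<ge> 2 * K"
    define t where "t = n div K"
    have t2: "t \<ge> 2" unfolding t_def using n K by (metis div_le_mono nonzero_mult_div_cancel_right not_gr0)
    define k where "k = t * (p - 1) * (p - 1)"
    have k: "0 < k" "k * L \<le> n"
    proof -
      show "0 < k" unfolding k_def using t2 p2 by simp
      have "k * L = t * K" unfolding k_def K_def by (simp add: algebra_simps)
      also have "\<dots> \<le> n" unfolding t_def by (simp add: mult.commute)
      finally show "k * L \<le> n" .
    qed
    have "p ^ (t - 2) \<le> cover_num (vecs (int p) (Suc (t - 1))) (vecs (int p) (Suc (t - 1))) (\<lambda>a b. int p dvd ip a b)"
      using ip_cover_lower[OF pi, of "t - 1"] t2 by (simp add: numeral_2_eq_2)
    also have "\<dots> \<le> cover_num (BITS k) (BITS k) (\<lambda>us vs. int p dvd int (cnt us vs))"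
      by (rule ip_to_bits[OF pi]) (use t2 in \<open>simp add: k_def\<close>)
    finally have c: "p ^ (t - 2) \<le> cover_num (BITS k) (BITS k) (\<lambda>us vs. p dvd cnt us vs)"
      by (simp add: int_dvd_int_iff)
    have "log 2 (real (2 ^ (t - 2))) \<le> log 2 (real (p ^ (t - 2)))"
      by (rule log_mono) (use p2 in \<open>auto intro: power_mono\<close>)
    also have "\<dots> \<le> N1_mon M n"
      by (rule gadget_N1_bound[OF OM fin G k _ c]) (use p2 in simp)
    finally have "real (t - 2) \<le> N1_mon M n" by (simp add: log_pow_cancel)
    then show "real (n div K) - 2 \<le> N1_mon M n" unfolding t_def using t2 t_def by linarith
  qed
qed

lemma hard_gadget_omega:
  assumes "ordered_monoid M" "finite (carrier M)" "hard_gadget M"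
  shows "N1_mon M \<in> \<Omega>(\<lambda>n. real n)"
  using assms(3) gadget_omega_disj[OF assms(1,2)] gadget_omega_mod[OF assms(1,2)]
  unfolding hard_gadget_def by blast


lemma gadget_repeat:
  assumes G: "gadget M I P L A B" and r: "r > 0"
  shows "gadget M I (\<lambda>c. P (r * c)) (r * L)
           (\<lambda>u. concat (replicate r (A u))) (\<lambda>v. concat (replicate r (B v)))"
  unfolding gadget_def
proof (intro conjI allI impI)
  show "order_ideal M I" using gadgetD(1)[OF G] .
  show "0 < r * L" using gadgetD(2)[OF G] r by simp
  fix u
  show "length (concat (replicate r (A u))) = r * L" "length (concat (replicate r (B u))) = r * L"
    using gadgetD(3,4)[OF G] by (simp_all add: length_concat_replicate)
  show "set (concat (replicate r (A u))) \<subseteq> carrier M" "set (concat (replicate r (B u))) \<subseteq> carrier M"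
    using gadgetD(5,6)[OF G] r by auto
next
  fix ps :: "(bool \<times> bool) list" assume ne: "ps \<noteq> []"
  define ps' where "ps' = concat (map (replicate r) ps)"
  have "concat (map (\<lambda>(u, v). interleave (concat (replicate r (A u))) (concat (replicate r (B v)))) ps)
      = concat (map (\<lambda>(u, v). interleave (A u) (B v)) ps')"
    unfolding ps'_def
  proof (induction ps)
    case (Cons q ps)
    obtain u v where "q = (u, v)" by (cases q)
    moreover have "interleave (concat (replicate r (A u))) (concat (replicate r (B v)))
        = concat (replicate r (interleave (A u) (B v)))"
      by (rule interleave_replicate) (simp add: gadgetD(3,4)[OF G])
    ultimately show ?case using Cons by (simp add: map_replicate)
  qed simp
  moreover have "length (filter (\<lambda>(u, v). u \<and> v) ps') = r * length (filter (\<lambda>(u, v). u \<and> v) ps)"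
    unfolding ps'_def by (induction ps) (auto simp: filter_concat)
  moreover have "ps' \<noteq> []" unfolding ps'_def using ne r by (cases ps) auto
  ultimately show "(lprod M (concat (map (\<lambda>(u, v). interleave (concat (replicate r (A u)))
                                          (concat (replicate r (B v)))) ps)) \<in> I)
      = P (r * length (filter (\<lambda>(u, v). u \<and> v) ps))"
    using gadgetD(7)[OF G] by simp
qed

text \<open>A gadget for divisibility of the count by some \<open>m \<noteq> 1\<close> is hard: for \<open>m = 0\<close> it is a
  disjointness gadget, and for \<open>m > 1\<close> repeating blocks \<open>m / p\<close> times, for a prime factor \<open>p\<close>
  of \<open>m\<close>, turns it into a gadget for divisibility by \<open>p\<close>.\<close>
lemma modular_gadget_hard:
  assumes G: "gadget M I (\<lambda>c. m dvd c) L A B" and m: "m \<noteq> 1"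
  shows "hard_gadget M"
proof (cases "m = 0")
  case True
  then have "gadget M I (\<lambda>c. c = 0) L A B" using G by simp
  then show ?thesis unfolding hard_gadget_def by blast
next
  case False
  obtain p where p: "prime p" "p dvd m" using prime_factor_nat[OF m] by blast
  define r where "r = m div p"
  have m_eq: "m = p * r" unfolding r_def using p by simp
  then have r: "r > 0" using False by (simp add: gr0I)
  have "(m dvd r * c) = (p dvd c)" for c using m_eq r by (simp add: mult.commute)
  then have "gadget M I (\<lambda>c. p dvd c) (r * L)
      (\<lambda>u. concat (replicate r (A u))) (\<lambda>v. concat (replicate r (B v)))"
    using gadget_repeat[OF G r] by simp
  then show ?thesis using p unfolding hard_gadget_def by blast
qed

section \<open>Gadgets are inherited along division\<close>

context
  fixes M :: "'m omonoid" and N :: "'n omonoid" and S :: "'m set" and h :: "'m \<Rightarrow> 'n"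
  assumes OM: "ordered_monoid M"
    and S_sub: "S \<subseteq> carrier M" and S_unit: "unit M \<in> S"
    and S_mult: "\<And>x y. x \<in> S \<Longrightarrow> y \<in> S \<Longrightarrow> mult M x y \<in> S"
    and h_onto: "h ` S = carrier N" and h_unit: "h (unit M) = unit N"
    and h_mult: "\<And>x y. x \<in> S \<Longrightarrow> y \<in> S \<Longrightarrow> h (mult M x y) = mult N (h x) (h y)"
    and h_mono: "\<And>x y. x \<in> S \<Longrightarrow> y \<in> S \<Longrightarrow> le M x y \<Longrightarrow> le N (h x) (h y)"
begin

lemma lprod_sub: "set xs \<subseteq> S \<Longrightarrow> lprod M xs \<in> S"
  by (induction xs) (simp_all add: lprod_def S_unit S_mult)

lemma lprod_hom: "set xs \<subseteq> S \<Longrightarrow> h (lprod M xs) = lprod N (map h xs)"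
  by (induction xs) (simp_all add: lprod_def h_unit h_mult lprod_sub[unfolded lprod_def])

definition pullback :: "'n set \<Rightarrow> 'm set" where
  "pullback I = {x \<in> carrier M. \<exists>s\<in>S. le M x s \<and> h s \<in> I}"

lemma pullback_ideal: "order_ideal M (pullback I)"
  unfolding order_ideal_def pullback_def using om_trans[OF OM] S_sub by blast

lemma pullback_iff:
  assumes I: "order_ideal N I" and x: "x \<in> S"
  shows "x \<in> pullback I \<longleftrightarrow> h x \<in> I"
proof
  assume "x \<in> pullback I"
  then obtain s where s: "s \<in> S" "le M x s" "h s \<in> I" unfolding pullback_def by blast
  then have "le N (h x) (h s)" using h_mono x by blast
  moreover have "h x \<in> carrier N" using x h_onto by blast
  ultimately show "h x \<in> I" using I s(3) unfolding order_ideal_def by blast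
next
  assume "h x \<in> I"
  then show "x \<in> pullback I" unfolding pullback_def using x S_sub om_refl[OF OM] by blast
qed

text \<open>Lift each block letter through a section of \<open>h\<close>; products of lifted blocks map onto the
  original products, so the pulled-back ideal recognises them in the same way.\<close>
lemma gadget_lift:
  assumes G: "gadget N I P L A B"
  shows "\<exists>I' A' B'. gadget M I' P L A' B'"
proof -
  define g where "g y = (SOME x. x \<in> S \<and> h x = y)" for y
  have g: "g y \<in> S \<and> h (g y) = y" if "y \<in> carrier N" for y
  proof -
    have "\<exists>x. x \<in> S \<and> h x = y" using that h_onto by (metis imageE)
    then show ?thesis unfolding g_def by (rule someI_ex)
  qed
  define A' where "A' u = map g (A u)" for u
  define B' where "B' u = map g (B u)" for u
  have gS: "g y \<in> S" if "y \<in> carrier N" for y using g[OF that] by simp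
  have setA': "set (A' u) \<subseteq> S" for u
    unfolding A'_def using gS gadgetD(5)[OF G] by auto
  have setB': "set (B' u) \<subseteq> S" for u
    unfolding B'_def using gS gadgetD(6)[OF G] by auto
  have hA: "map h (A' u) = A u" and hB: "map h (B' u) = B u" for u
    unfolding A'_def B'_def map_map
    by (rule map_idI, use g gadgetD(5,6)[OF G] in force)+
  have lenA': "length (A' u) = L" and lenB': "length (B' u) = L" for u
    unfolding A'_def B'_def using gadgetD(3,4)[OF G] by simp_all
  have blocks_sub: "set (interleave (A' u) (B' v)) \<subseteq> S" for u v
    using interleave_set[of "A' u" "B' v"] setA'[of u] setB'[of v] by blast
  have blocks_hom: "map h (interleave (A' u) (B' v)) = interleave (A u) (B v)" for u v
    using interleave_map[of "A' u" "B' v" h] lenA' lenB' hA hB by simp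
  have "gadget M (pullback I) P L A' B'"
    unfolding gadget_def
  proof (intro conjI allI impI)
    show "order_ideal M (pullback I)" by (rule pullback_ideal)
    show "0 < L" using gadgetD(2)[OF G] .
    fix u
    show "length (A' u) = L" "length (B' u) = L" using lenA' lenB' by simp_all
    show "set (A' u) \<subseteq> carrier M" "set (B' u) \<subseteq> carrier M" using setA' setB' S_sub by blast+
  next
    fix ps :: "(bool \<times> bool) list" assume ne: "ps \<noteq> []"
    define xs where "xs = concat (map (\<lambda>(u, v). interleave (A' u) (B' v)) ps)"
    have sx: "set xs \<subseteq> S" unfolding xs_def using blocks_sub by auto
    have "map h xs = concat (map (\<lambda>(u, v). interleave (A u) (B v)) ps)"
      unfolding xs_def map_concat by (simp add: split_def blocks_hom comp_def)
    then have "h (lprod M xs) = lprod N (concat (map (\<lambda>(u, v). interleave (A u) (B v)) ps))"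
      using lprod_hom[OF sx] by simp
    then have "lprod M xs \<in> pullback I \<longleftrightarrow> P (length (filter (\<lambda>(u, v). u \<and> v) ps))"
      using pullback_iff[OF gadgetD(1)[OF G] lprod_sub[OF sx]] gadgetD(7)[OF G ne] by simp
    then show "(lprod M (concat (map (\<lambda>(u, v). interleave (A' u) (B' v)) ps)) \<in> pullback I) =
          P (length (filter (\<lambda>(u, v). u \<and> v) ps))"
      unfolding xs_def .
  qed
  then show ?thesis by blast
qed

end

lemma hard_gadget_divides:
  assumes OM: "ordered_monoid M" and D: "odivides N M" and H: "hard_gadget N"
  shows "hard_gadget M"
proof -
  obtain S h where "S \<subseteq> carrier M" "unit M \<in> S" "\<forall>x\<in>S. \<forall>y\<in>S. mult M x y \<in> S"
    "h ` S = carrier N" "h (unit M) = unit N" "\<forall>x\<in>S. \<forall>y\<in>S. h (mult M x y) = mult N (h x) (h y)"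
    "\<forall>x\<in>S. \<forall>y\<in>S. le M x y \<longrightarrow> le N (h x) (h y)"
    using D unfolding odivides_def by (elim exE conjE) blast
  note div = this
  have lift: "\<exists>I' A' B'. gadget M I' P L A' B'" if "gadget N I P L A B" for I P L A B
    by (rule gadget_lift[OF OM div(1,2) _ div(4,5) _ _ that]) (use div in blast)+
  from H consider (disj) I L A B where "gadget N I (\<lambda>c. c = 0) L A B"
    | (modp) p I L A B where "prime p" "gadget N I (\<lambda>c. p dvd c) L A B"
    unfolding hard_gadget_def by blast
  then show ?thesis
  proof cases
    case disj
    then show ?thesis using lift unfolding hard_gadget_def by blast
  next
    case modp
    then obtain I' A' B' where "gadget M I' (\<lambda>c. p dvd c) L A' B'" using lift by blast
    then show ?thesis using modp(1) unfolding hard_gadget_def by blast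
  qed
qed

section \<open>Syntactic monoids of languages avoiding \<open>aa\<close>\<close>

text \<open>Basic facts on the syntactic preorder and its classes: the preorder is a congruence, so
  the class of a concatenation is the product of the classes.\<close>

lemma synle_refl: "synle L x x" unfolding synle_def by simp

lemma synle_trans: "synle L x y \<Longrightarrow> synle L y z \<Longrightarrow> synle L x z" unfolding synle_def by blast

lemma synle_cong: "synle L x y \<Longrightarrow> synle L (w @ x @ z) (w @ y @ z)"
  unfolding synle_def
proof (intro allI impI)
  fix u v assume H: "\<forall>u v. u @ y @ v \<in> L \<longrightarrow> u @ x @ v \<in> L" and "u @ (w @ y @ z) @ v \<in> L"
  then have "(u @ w) @ y @ (z @ v) \<in> L" by simp
  then have "(u @ w) @ x @ (z @ v) \<in> L" using H by blast
  then show "u @ (w @ x @ z) @ v \<in> L" by simp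
qed

lemma synle_L: "synle L x y \<Longrightarrow> y \<in> L \<Longrightarrow> x \<in> L"
  unfolding synle_def by (erule allE[of _ "[]"], erule allE[of _ "[]"]) simp

lemma syneq_refl: "syneq L x x" unfolding syneq_def by (simp add: synle_refl)
lemma syneq_sym: "syneq L x y \<Longrightarrow> syneq L y x" unfolding syneq_def by simp
lemma syneq_trans: "syneq L x y \<Longrightarrow> syneq L y z \<Longrightarrow> syneq L x z"
  unfolding syneq_def using synle_trans by blast

lemma syneq_append: "syneq L x x' \<Longrightarrow> syneq L y y' \<Longrightarrow> syneq L (x @ y) (x' @ y')"
proof -
  assume H: "syneq L x x'" "syneq L y y'"
  have "syneq L (x @ y) (x' @ y)"
    using H(1) synle_cong[of L x x' "[]" y] synle_cong[of L x' x "[]" y] unfolding syneq_def by simp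
  moreover have "syneq L (x' @ y) (x' @ y')"
    using H(2) synle_cong[of L y y' x' "[]"] synle_cong[of L y' y x' "[]"] unfolding syneq_def by simp
  ultimately show ?thesis using syneq_trans by blast
qed

lemma synclass_eq: "synclass L x = synclass L y \<longleftrightarrow> syneq L x y"
proof
  assume "synclass L x = synclass L y"
  moreover have "x \<in> synclass L x" unfolding synclass_def by (simp add: syneq_refl)
  ultimately have "x \<in> synclass L y" by simp
  then show "syneq L x y" unfolding synclass_def by simp
next
  assume H: "syneq L x y"
  show "synclass L x = synclass L y" unfolding synclass_def
    using H syneq_trans syneq_sym by blast
qed

lemma rep_synclass: "syneq L (rep (synclass L w)) w"
proof -
  have "w \<in> synclass L w" unfolding synclass_def by (simp add: syneq_refl)
  then have "rep (synclass L w) \<in> synclass L w" unfolding rep_def by (rule someI)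
  then show ?thesis unfolding synclass_def by simp
qed

lemma synmon_mult: "mult (synmon L) (synclass L x) (synclass L y) = synclass L (x @ y)"
proof -
  have "syneq L (rep (synclass L x) @ rep (synclass L y)) (x @ y)"
    by (rule syneq_append[OF rep_synclass rep_synclass])
  then show ?thesis unfolding synmon_def by (simp add: synclass_eq)
qed

lemma synmon_lprod: "lprod (synmon L) (map (synclass L) ws) = synclass L (concat ws)"
proof (induction ws)
  case Nil then show ?case by (simp add: lprod_def synmon_def)
next
  case (Cons w ws)
  have "lprod (synmon L) (map (synclass L) (w # ws)) = mult (synmon L) (synclass L w) (lprod (synmon L) (map (synclass L) ws))"
    by (simp add: lprod_def)
  also have "\<dots> = synclass L (w @ concat ws)" using Cons synmon_mult by simp
  finally show ?case by simp
qed

definition synI :: "'c list set \<Rightarrow> 'c list set set" where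
  "synI L = {A \<in> carrier (synmon L). rep A \<in> L}"

lemma synI_ideal: "order_ideal (synmon L) (synI L)"
  unfolding order_ideal_def synI_def
proof (intro conjI ballI impI)
  show "{A \<in> carrier (synmon L). rep A \<in> L} \<subseteq> carrier (synmon L)" by blast
  fix x y assume "x \<in> carrier (synmon L)" "y \<in> {A \<in> carrier (synmon L). rep A \<in> L}" "le (synmon L) x y"
  then have "rep y \<in> L" "synle L (rep x) (rep y)" unfolding synmon_def by auto
  then have "rep x \<in> L" using synle_L by blast
  then show "x \<in> {A \<in> carrier (synmon L). rep A \<in> L}" using \<open>x \<in> carrier (synmon L)\<close> by blast
qed

lemma synclass_in_synI: "synclass L w \<in> synI L \<longleftrightarrow> w \<in> L"
proof -
  have e: "syneq L (rep (synclass L w)) w" by (rule rep_synclass)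
  have c: "synclass L w \<in> carrier (synmon L)" unfolding synmon_def by simp
  have "rep (synclass L w) \<in> L \<longleftrightarrow> w \<in> L"
  proof
    assume "rep (synclass L w) \<in> L"
    then show "w \<in> L" using e synle_L unfolding syneq_def by blast
  next
    assume "w \<in> L"
    then show "rep (synclass L w) \<in> L" using e synle_L unfolding syneq_def by blast
  qed
  then show ?thesis unfolding synI_def using c by simp
qed

lemma alternating_no_aa: "concat (replicate k [a, b]) \<noteq> u @ [a, a] @ v"
proof (induction k arbitrary: u)
  case 0 then show ?case by simp
next
  case (Suc k)
  show ?case
  proof
    assume H: "concat (replicate (Suc k) [a, b]) = u @ [a, a] @ v"
    then have H': "a # b # concat (replicate k [a, b]) = u @ [a, a] @ v" by simp
    show False
    proof (cases u)
      case Nil then show False using H' by simp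
    next
      case (Cons x u1)
      show False
      proof (cases u1)
        case Nil then show False using H' Cons by simp
      next
        case (Cons y u2)
        then have "concat (replicate k [a, b]) = u2 @ [a, a] @ v" using H' \<open>u = x # u1\<close> by simp
        then show False using Suc.IH by blast
      qed
    qed
  qed
qed

text \<open>Alice holds letter \<open>a\<close> and then \<open>b\<close> for a one bit, Bob likewise; interleaved they spell
  \<open>aabb\<close> if both bits are set, \<open>ab\<close> if exactly one is set and the empty word otherwise.\<close>
definition block_word :: "bool \<Rightarrow> bool \<Rightarrow> ab list" where
  "block_word u v = (if u then [a] else []) @ (if v then [a] else []) @ (if u then [b] else []) @ (if v then [b] else [])"

definition syn_block :: "ab list set \<Rightarrow> bool \<Rightarrow> ab list set list" where
  "syn_block L u = [synclass L (if u then [a] else []), synclass L (if u then [b] else [])]"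

lemma syn_blocks_lprod:
  "lprod (synmon L) (concat (map (\<lambda>(u, v). interleave (syn_block L u) (syn_block L v)) ps))
   = synclass L (concat (map (\<lambda>(u, v). block_word u v) ps))"
proof -
  have "concat (map (\<lambda>(u, v). interleave (syn_block L u) (syn_block L v)) ps)
      = map (synclass L) (concat (map (\<lambda>(u, v). [if u then [a] else [], if v then [a] else [],
                                                   if u then [b] else [], if v then [b] else []]) ps))"
    by (induction ps) (auto simp: interleave_def syn_block_def)
  moreover have "concat (concat (map (\<lambda>(u, v). [if u then [a] else [], if v then [a] else [],
                                                   if u then [b] else [], if v then [b] else []]) ps))
      = concat (map (\<lambda>(u, v). block_word u v) ps)"
    by (induction ps) (auto simp: block_word_def)
  ultimately show ?thesis by (simp add: synmon_lprod)
qed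

lemma block_words_disjoint:
  "(True, True) \<notin> set ps \<Longrightarrow> \<exists>k. concat (map (\<lambda>(u, v). block_word u v) ps) = concat (replicate k [a, b])"
proof (induction ps)
  case Nil show ?case by (rule exI[of _ 0]) simp
next
  case (Cons q ps)
  then obtain k where k: "concat (map (\<lambda>(u, v). block_word u v) ps) = concat (replicate k [a, b])" by auto
  obtain u v where q: "q = (u, v)" by (cases q)
  have "block_word u v = [] \<or> block_word u v = [a, b]" using Cons.prems q unfolding block_word_def by auto
  then show ?case
  proof
    assume "block_word u v = [a, b]"
    then have "concat (map (\<lambda>(u, v). block_word u v) (q # ps)) = concat (replicate (Suc k) [a, b])"
      using k q by simp
    then show ?thesis by blast
  qed (use k q in auto)
qed

lemma block_words_intersecting:
  "(True, True) \<in> set ps \<Longrightarrow> \<exists>x y. concat (map (\<lambda>(u, v). block_word u v) ps) = x @ [a, a] @ y"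
proof -
  assume "(True, True) \<in> set ps"
  then obtain ps1 ps2 where "ps = ps1 @ (True, True) # ps2" by (meson split_list)
  then have "concat (map (\<lambda>(u, v). block_word u v) ps)
      = concat (map (\<lambda>(u, v). block_word u v) ps1) @ [a, a] @ [b, b] @ concat (map (\<lambda>(u, v). block_word u v) ps2)"
    by (simp add: block_word_def)
  then show ?thesis by blast
qed

lemma syn_gadget:
  assumes alt: "\<And>k. concat (replicate k [a, b]) \<in> L" and no_aa: "\<And>x y. x @ [a, a] @ y \<notin> L"
  shows "gadget (synmon L) (synI L) (\<lambda>c. c = 0) 2 (syn_block L) (syn_block L)"
  unfolding gadget_def
proof (intro conjI allI impI)
  show "order_ideal (synmon L) (synI L)" by (rule synI_ideal)
  fix u
  show "length (syn_block L u) = 2" "length (syn_block L u) = 2" by (simp_all add: syn_block_def)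
  show "set (syn_block L u) \<subseteq> carrier (synmon L)" "set (syn_block L u) \<subseteq> carrier (synmon L)"
    by (auto simp: syn_block_def synmon_def)
next
  fix ps :: "(bool \<times> bool) list"
  have "length (filter (\<lambda>(u, v). u \<and> v) ps) = 0 \<longleftrightarrow> (True, True) \<notin> set ps"
    by (auto simp: filter_empty_conv)
  moreover have "concat (map (\<lambda>(u, v). block_word u v) ps) \<in> L \<longleftrightarrow> (True, True) \<notin> set ps"
    using block_words_disjoint[of ps] block_words_intersecting[of ps] alt no_aa by auto
  ultimately show "(lprod (synmon L) (concat (map (\<lambda>(u, v). interleave (syn_block L u) (syn_block L v)) ps))
      \<in> synI L) = (length (filter (\<lambda>(u, v). u \<and> v) ps) = 0)"
    by (simp add: syn_blocks_lprod synclass_in_synI)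
qed simp

lemma hard_gadget_BA2_plus: "hard_gadget BA2_plus"
proof -
  have "gadget BA2_plus (synI L_BA2) (\<lambda>c. c = 0) 2 (syn_block L_BA2) (syn_block L_BA2)"
    unfolding BA2_plus_def
  proof (rule syn_gadget)
    show "concat (replicate k [a, b]) \<in> L_BA2" for k unfolding L_BA2_def by blast
    show "x @ [a, a] @ y \<notin> L_BA2" for x y
    proof
      assume "x @ [a, a] @ y \<in> L_BA2"
      then obtain k where "x @ [a, a] @ y = concat (replicate k [a, b])" unfolding L_BA2_def by blast
      then show False using alternating_no_aa[of k x y] by simp
    qed
  qed
  then show ?thesis unfolding hard_gadget_def by blast
qed

lemma hard_gadget_U_plus: "hard_gadget U_plus"
proof -
  have "gadget U_plus (synI L_U) (\<lambda>c. c = 0) 2 (syn_block L_U) (syn_block L_U)"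
    unfolding U_plus_def
  proof (rule syn_gadget)
    show "concat (replicate k [a, b]) \<in> L_U" for k unfolding L_U_def using alternating_no_aa[of k] by simp
    show "x @ [a, a] @ y \<notin> L_U" for x y unfolding L_U_def by blast
  qed
  then show ?thesis unfolding hard_gadget_def by blast
qed

section \<open>Non-commutative finite groups\<close>

context
  fixes G :: "'g omonoid"
  assumes OM: "ordered_monoid G" and GR: "is_group G" and FIN: "finite (carrier G)"
begin

lemma g_inv: "x \<in> carrier G \<Longrightarrow> \<exists>y\<in>carrier G. mult G x y = unit G \<and> mult G y x = unit G"
  using GR unfolding is_group_def by blast

lemma g_cancel:
  assumes "x \<in> carrier G" "y \<in> carrier G" "z \<in> carrier G" "mult G x y = mult G x z"
  shows "y = z"
proof -
  obtain x' where x': "x' \<in> carrier G" "mult G x' x = unit G" using g_inv[OF assms(1)] by blast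
  have "y = mult G (mult G x' x) y" using x' om_lunit[OF OM assms(2)] by simp
  also have "\<dots> = mult G x' (mult G x z)" using om_assoc[OF OM x'(1) assms(1,2)] assms(4) by simp
  also have "\<dots> = z" using om_assoc[OF OM x'(1) assms(1,3)] x' om_lunit[OF OM assms(3)] by simp
  finally show ?thesis .
qed

text \<open>Every element of a finite group has a positive power equal to the unit (pigeonhole on
  \<open>z\<^sup>0, \<dots>, z\<^sup>N\<close> and cancellation).\<close>
lemma pow_period:
  assumes z: "z \<in> carrier G"
  shows "\<exists>m>0. opow G z m = unit G"
proof -
  define N where "N = card (carrier G)"
  have "\<not> inj_on (opow G z) {0..N}"
  proof
    assume inj: "inj_on (opow G z) {0..N}"
    have "opow G z ` {0..N} \<subseteq> carrier G" using opow_closed[OF OM z] by blast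
    then have "card {0..N} \<le> card (carrier G)" using card_inj_on_le[OF inj _ FIN] by blast
    then show False unfolding N_def by simp
  qed
  then obtain i j where ij: "i < j" "opow G z i = opow G z j"
    unfolding inj_on_def by (metis linorder_neqE_nat)
  have "mult G (opow G z i) (opow G z (j - i)) = mult G (opow G z i) (unit G)"
    using opow_add[OF OM z, of i "j - i"] ij om_runit[OF OM opow_closed[OF OM z]] by simp
  then have "opow G z (j - i) = unit G"
    using g_cancel[OF opow_closed[OF OM z] opow_closed[OF OM z] om_unit[OF OM]] by blast
  then show ?thesis using ij by (intro exI[of _ "j - i"]) simp
qed

text \<open>A stable order on a finite group is trivial: \<open>x \<le> y\<close> gives \<open>z = x y\<^sup>-\<^sup>1 \<le> 1\<close>, then have the
  powers of \<open>z\<close> decrease, and since some power of \<open>z\<close> is \<open>1\<close> we get \<open>1 \<le> z\<close>.\<close>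
lemma stable_order_trivial:
  assumes x: "x \<in> carrier G" and y: "y \<in> carrier G" and le: "le G x y"
  shows "x = y"
proof -
  obtain y' where y': "y' \<in> carrier G" "mult G y y' = unit G" "mult G y' y = unit G"
    using g_inv[OF y] by blast
  define z where "z = mult G x y'"
  have zc: "z \<in> carrier G" unfolding z_def using om_closed[OF OM x y'(1)] .
  have z1: "le G z (unit G)" unfolding z_def using om_monoR[OF OM x y y'(1) le] y' by simp
  have zpow: "le G (opow G z (Suc j)) z" for j
  proof (induction j)
    case 0 then show ?case using om_refl[OF OM zc] om_runit[OF OM zc] by simp
  next
    case (Suc j)
    have c: "opow G z (Suc j) \<in> carrier G" using opow_closed[OF OM zc] .
    have "le G (mult G (opow G z (Suc j)) z) (mult G (opow G z (Suc j)) (unit G))"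
      by (rule om_monoL[OF OM zc om_unit[OF OM] c z1])
    then have "le G (opow G z (Suc (Suc j))) (opow G z (Suc j))"
      using opow_Suc2[OF OM zc, of "Suc j"] om_runit[OF OM c] by simp
    then show ?case using om_trans[OF OM opow_closed[OF OM zc] c zc _ Suc.IH] by blast
  qed
  obtain m where m: "m > 0" "opow G z m = unit G" using pow_period[OF zc] by blast
  have "le G (unit G) z" using zpow[of "m - 1"] m by simp
  then have z_unit: "z = unit G" using om_antisym[OF OM zc om_unit[OF OM] z1] by simp
  have "x = mult G x (mult G y' y)" using y' om_runit[OF OM x] by simp
  also have "\<dots> = mult G z y" unfolding z_def using om_assoc[OF OM x y'(1) y] by simp
  also have "\<dots> = y" using z_unit om_lunit[OF OM y] by simp
  finally show ?thesis .
qed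

lemma element_order:
  assumes z: "z \<in> carrier G"
  shows "\<exists>m. (\<forall>k. opow G z k = unit G \<longleftrightarrow> m dvd k) \<and> (z \<noteq> unit G \<longrightarrow> m \<noteq> 1)"
proof -
  define m where "m = (LEAST m. m > 0 \<and> opow G z m = unit G)"
  have m: "m > 0" "opow G z m = unit G"
    using LeastI_ex[OF pow_period[OF z]] unfolding m_def by auto
  have minm: "opow G z k \<noteq> unit G" if "0 < k" "k < m" for k
    using not_less_Least[of k "\<lambda>m. m > 0 \<and> opow G z m = unit G"] that unfolding m_def by blast
  have "opow G z k = unit G \<longleftrightarrow> m dvd k" for k
  proof
    assume "m dvd k"
    then show "opow G z k = unit G" using opow_mult[OF OM z, of m] m opow_unit[OF OM] by auto
  next
    assume k: "opow G z k = unit G"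
    have "opow G z k = mult G (opow G z (m * (k div m))) (opow G z (k mod m))"
      using opow_add[OF OM z, of "m * (k div m)" "k mod m"] by simp
    then have "opow G z (k mod m) = unit G"
      using k opow_mult[OF OM z, of m "k div m"] m opow_unit[OF OM] om_lunit[OF OM opow_closed[OF OM z]] by simp
    then have "k mod m = 0" using minm[of "k mod m"] m by (cases "k mod m = 0") auto
    then show "m dvd k" by auto
  qed
  moreover have "z \<noteq> unit G \<longrightarrow> m \<noteq> 1" using m om_runit[OF OM z] by auto
  ultimately show ?thesis by blast
qed

lemma lprod_4: "x1 \<in> carrier G \<Longrightarrow> x2 \<in> carrier G \<Longrightarrow> x3 \<in> carrier G \<Longrightarrow> x4 \<in> carrier G \<Longrightarrow>
   lprod G [x1, x2, x3, x4] = mult G x1 (mult G x2 (mult G x3 x4))"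
  by (simp add: lprod_def om_runit[OF OM])

lemma commutator_ne_unit:
  assumes xy: "x \<in> carrier G" "y \<in> carrier G" "mult G x y \<noteq> mult G y x"
    and x': "x' \<in> carrier G" "mult G x' x = unit G"
    and y': "y' \<in> carrier G" "mult G y' y = unit G"
  shows "lprod G [x, y, x', y'] \<noteq> unit G"
proof
  assume c1: "lprod G [x, y, x', y'] = unit G"
  have yx: "mult G y x \<in> carrier G" using om_closed[OF OM xy(2) xy(1)] .
  have "mult G y' (mult G y x) = x" using om_assoc[OF OM y'(1) xy(2) xy(1)] y'(2) om_lunit[OF OM xy(1)] by simp
  then have "mult G (lprod G [x, y, x', y']) (mult G y x) = mult G x (mult G y (mult G x' x))"
    using lprod_4[OF xy(1,2) x'(1) y'(1)] by (simp add: om_assoc[OF OM] om_closed[OF OM] xy x' y')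
  then have "mult G (lprod G [x, y, x', y']) (mult G y x) = mult G x y" using x'(2) om_runit[OF OM xy(2)] by simp
  then show False using c1 om_lunit[OF OM yx] xy(3) by simp
qed

text \<open>Gadget for counting modulo the order \<open>m\<close> of a commutator \<open>c\<close>: Alice plays \<open>(x, x\<^sup>-\<^sup>1)\<close> or
  units, Bob \<open>(y, y\<^sup>-\<^sup>1)\<close> or units; an interleaved block evaluates to \<open>c\<close> if both bits are set and
  to \<open>1\<close> otherwise, so the product is \<open>c\<close> to the power of the intersection size.\<close>
lemma group_gadget:
  assumes NC: "noncommutative G"
  shows "hard_gadget G"
proof -
  obtain x y where xy: "x \<in> carrier G" "y \<in> carrier G" "mult G x y \<noteq> mult G y x"
    using NC unfolding noncommutative_def by blast
  obtain x' where x': "x' \<in> carrier G" "mult G x x' = unit G" "mult G x' x = unit G" using g_inv[OF xy(1)] by blast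
  obtain y' where y': "y' \<in> carrier G" "mult G y y' = unit G" "mult G y' y = unit G" using g_inv[OF xy(2)] by blast
  have U: "unit G \<in> carrier G" by (rule om_unit[OF OM])
  define c where "c = lprod G [x, y, x', y']"
  have cc: "c \<in> carrier G" unfolding c_def by (rule lprod_closed[OF OM]) (use xy x' y' in auto)
  have "c \<noteq> unit G" unfolding c_def using commutator_ne_unit xy x' y' by blast
  then obtain m where m1: "m \<noteq> 1" and per: "\<And>k. opow G c k = unit G \<longleftrightarrow> m dvd k"
    using element_order[OF cc] by blast
  define A where "A u = (if u then [x, x'] else [unit G, unit G])" for u
  define B where "B v = (if v then [y, y'] else [unit G, unit G])" for v
  have sA: "set (A u) \<subseteq> carrier G" and sB: "set (B u) \<subseteq> carrier G" for u
    unfolding A_def B_def using xy x' y' U by auto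
  have setI: "set (interleave (A u) (B v)) \<subseteq> carrier G" for u v
    using interleave_set[of "A u" "B v"] sA sB by blast
  have blk: "lprod G (interleave (A u) (B v)) = (if u \<and> v then c else unit G)" for u v
    unfolding A_def B_def c_def interleave_def
    using lprod_4[OF xy(1) U x'(1) U] lprod_4[OF U xy(2) U y'(1)] lprod_4[OF U U U U] x'(2) y'(2)
      om_lunit[OF OM] om_runit[OF OM] xy x' y' U om_closed[OF OM]
    by auto
  have total: "lprod G (concat (map (\<lambda>(u, v). interleave (A u) (B v)) ps))
      = opow G c (length (filter (\<lambda>(u, v). u \<and> v) ps))" for ps
  proof (induction ps)
    case (Cons q ps)
    obtain u v where q: "q = (u, v)" by (cases q)
    have "set (concat (map (\<lambda>(u, v). interleave (A u) (B v)) ps)) \<subseteq> carrier G" using setI by auto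
    then show ?case
      using Cons blk[of u v] lprod_append[OF OM setI] om_lunit[OF OM opow_closed[OF OM cc]] q by simp
  qed (simp add: lprod_def)
  have "gadget G {unit G} (\<lambda>k. m dvd k) 2 A B"
    unfolding gadget_def
  proof (intro conjI allI impI)
    show "order_ideal G {unit G}" unfolding order_ideal_def using U stable_order_trivial[OF _ U] by blast
    fix u
    show "length (A u) = 2" "length (B u) = 2" unfolding A_def B_def by simp_all
    show "set (A u) \<subseteq> carrier G" "set (B u) \<subseteq> carrier G" using sA sB by blast+
  next
    fix ps :: "(bool \<times> bool) list"
    show "(lprod G (concat (map (\<lambda>(u, v). interleave (A u) (B v)) ps)) \<in> {unit G}) =
          (m dvd length (filter (\<lambda>(u, v). u \<and> v) ps))"
      unfolding total using per by simp
  qed simp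
  then show ?thesis using m1 by (rule modular_gadget_hard)
qed

end

section \<open>\<open>T\<^sub>q\<close> monoids\<close>

text \<open>Fix idempotents \<open>e, f\<close> witnessing that \<open>M\<close> is a \<open>T\<^sub>q\<close> monoid, and \<open>\<phi> = e f\<close>.  The elements
  \<open>cyc k = \<phi>\<^sup>k e\<close> form a cyclic group of order \<open>q\<close> with identity \<open>e\<close>, and the stable order can only
  compare \<open>cyc k\<close> with \<open>e\<close> when they are equal.\<close>
context
  fixes M :: "'m omonoid" and e f :: 'm and q :: nat
  assumes OM: "ordered_monoid M" and ec: "e \<in> carrier M" and fc: "f \<in> carrier M"
    and ee: "mult M e e = e" and ff: "mult M f f = f"
    and qe: "mult M (opow M (mult M e f) q) e = e"
    and qn: "\<And>r. r > 0 \<Longrightarrow> \<not> q dvd r \<Longrightarrow> mult M (opow M (mult M e f) r) e \<noteq> e"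
    and q1: "q > 1"
begin

abbreviation "phi \<equiv> mult M e f"
definition cyc :: "nat \<Rightarrow> 'm" where "cyc k = mult M (opow M phi k) e"

lemma phi_closed: "phi \<in> carrier M" using om_closed[OF OM ec fc] .
lemma phi_pow_closed: "opow M phi k \<in> carrier M" using opow_closed[OF OM phi_closed] .
lemma cyc_closed: "cyc k \<in> carrier M" unfolding cyc_def using om_closed[OF OM phi_pow_closed ec] .
lemma cyc_0: "cyc 0 = e" unfolding cyc_def using om_lunit[OF OM ec] by simp

lemma e_phi: "mult M e phi = phi"
  using om_assoc[OF OM ec ec fc] ee by simp

lemma e_pow: "k > 0 \<Longrightarrow> mult M e (opow M phi k) = opow M phi k"
proof (cases k)
  case (Suc j)
  have "mult M e (opow M phi (Suc j)) = mult M (mult M e phi) (opow M phi j)"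
    using om_assoc[OF OM ec phi_closed phi_pow_closed] by simp
  then show ?thesis using Suc e_phi by simp
qed simp

lemma e_cyc: "mult M e (cyc k) = cyc k"
proof (cases "k = 0")
  case True then show ?thesis using cyc_0 ee by simp
next
  case False
  have "mult M e (cyc k) = mult M (mult M e (opow M phi k)) e"
    unfolding cyc_def using om_assoc[OF OM ec phi_pow_closed ec] by simp
  then show ?thesis using e_pow False unfolding cyc_def by simp
qed

lemma cyc_e: "mult M (cyc k) e = cyc k"
  unfolding cyc_def using om_assoc[OF OM phi_pow_closed ec ec] ee by simp

lemma cyc_add: "mult M (cyc j) (cyc k) = cyc (j + k)"
proof -
  have "mult M (cyc j) (cyc k) = mult M (opow M phi j) (mult M e (cyc k))"
    unfolding cyc_def[of j] using om_assoc[OF OM phi_pow_closed ec cyc_closed] by simp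
  also have "\<dots> = mult M (opow M phi j) (cyc k)" using e_cyc by simp
  also have "\<dots> = mult M (mult M (opow M phi j) (opow M phi k)) e"
    unfolding cyc_def using om_assoc[OF OM phi_pow_closed phi_pow_closed ec] by simp
  also have "\<dots> = cyc (j + k)" unfolding cyc_def using opow_add[OF OM phi_closed] by simp
  finally show ?thesis .
qed

lemma cyc_fe: "mult M (cyc k) (mult M f e) = cyc (Suc k)"
proof -
  have "mult M (cyc k) (mult M f e) = mult M (opow M phi k) (mult M e (mult M f e))"
    unfolding cyc_def using om_assoc[OF OM phi_pow_closed ec om_closed[OF OM fc ec]] by simp
  also have "mult M e (mult M f e) = mult M phi e" using om_assoc[OF OM ec fc ec] by simp
  also have "mult M (opow M phi k) (mult M phi e) = mult M (mult M (opow M phi k) phi) e"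
    using om_assoc[OF OM phi_pow_closed phi_closed ec] by simp
  also have "mult M (opow M phi k) phi = opow M phi (Suc k)" using opow_Suc2[OF OM phi_closed] by simp
  finally show ?thesis unfolding cyc_def .
qed

lemma cyc_q: "cyc q = e" using qe unfolding cyc_def .

lemma cyc_mod: "cyc k = cyc (k mod q)"
proof -
  have "cyc (q * j + m) = cyc m" for j m
  proof (induction j)
    case 0 then show ?case by simp
  next
    case (Suc j)
    have "cyc (q * Suc j + m) = mult M (cyc q) (cyc (q * j + m))" using cyc_add by (simp add: algebra_simps)
    also have "\<dots> = cyc (q * j + m)" using cyc_q e_cyc by simp
    finally show ?case using Suc by simp
  qed
  from this[of "k div q" "k mod q"] show ?thesis by simp
qed

lemma cyc_e_iff: "cyc k = e \<longleftrightarrow> q dvd k"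
proof
  assume "q dvd k" then show "cyc k = e" using cyc_mod[of k] cyc_0 by simp
next
  assume k: "cyc k = e"
  show "q dvd k"
  proof (rule ccontr)
    assume nd: "\<not> q dvd k"
    then have "k mod q > 0" "\<not> q dvd k mod q" using q1 by (auto simp: dvd_eq_mod_eq_0)
    then have "cyc (k mod q) \<noteq> e" using qn unfolding cyc_def by blast
    then show False using k cyc_mod[of k] by simp
  qed
qed

text \<open>If \<open>cyc K \<le> e\<close>, multiplying by \<open>cyc K\<close> repeatedly gives the descending chain
  \<open>e = cyc (q K) \<le> \<dots> \<le> cyc K \<le> e\<close>.\<close>
lemma cyc_le_e_iff: "le M (cyc K) e \<longleftrightarrow> cyc K = e"
proof
  assume h: "le M (cyc K) e"
  have st: "le M (cyc (Suc j * K)) (cyc K)" for j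
  proof (induction j)
    case 0 then show ?case using om_refl[OF OM cyc_closed] by simp
  next
    case (Suc j)
    have "cyc (Suc (Suc j) * K) = mult M (cyc (Suc j * K)) (cyc K)" using cyc_add by (simp add: algebra_simps)
    moreover have "le M (mult M (cyc (Suc j * K)) (cyc K)) (mult M (cyc (Suc j * K)) e)"
      by (rule om_monoL[OF OM cyc_closed ec cyc_closed h])
    moreover have "mult M (cyc (Suc j * K)) e = cyc (Suc j * K)" by (rule cyc_e)
    ultimately have "le M (cyc (Suc (Suc j) * K)) (cyc (Suc j * K))" by simp
    then show ?case using om_trans[OF OM cyc_closed cyc_closed cyc_closed _ Suc.IH] by blast
  qed
  have "cyc (Suc (q - 1) * K) = e" using cyc_e_iff q1 by simp
  then have "le M e (cyc K)" using st[of "q - 1"] by simp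
  then show "cyc K = e" using om_antisym[OF OM cyc_closed ec h] by simp
next
  assume "cyc K = e" then show "le M (cyc K) e" using om_refl[OF OM ec] by simp
qed

text \<open>The blocks: each bit contributes a letter \<open>f\<close> (or the unit) at \<open>q\<close> positions.  One pass
  through an interleaved block advances \<open>cyc\<close> once if some bit is set and \<open>q - 1\<close> more times for
  each set bit, so an intersecting pair contributes \<open>2 q - 1 \<equiv> -1\<close> and the others \<open>0\<close> or
  \<open>q \<equiv> 0\<close> (modulo \<open>q\<close>).\<close>
definition f_if :: "bool \<Rightarrow> 'm" where "f_if u = (if u then f else unit M)"
lemma f_if_closed: "f_if u \<in> carrier M" unfolding f_if_def using fc om_unit[OF OM] by simp

definition alice_block :: "bool \<Rightarrow> 'm list" where
  "alice_block u = [e, f_if u, unit M] @ replicate (q - 1) (f_if u) @ concat (replicate (q - 1) [unit M, unit M])"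
definition bob_block :: "bool \<Rightarrow> 'm list" where
  "bob_block v = [unit M, f_if v, e] @ replicate (q - 1) e @ concat (replicate (q - 1) [f_if v, e])"

definition ind :: "bool \<Rightarrow> nat" where "ind u = (if u then 1 else 0)"
definition block_exp :: "bool \<Rightarrow> bool \<Rightarrow> nat" where
  "block_exp u v = (if u \<or> v then 1 else 0) + (q - 1) * ind u + (q - 1) * ind v"

lemma alice_block_length: "length (alice_block u) = 3 * q" unfolding alice_block_def using q1 by (simp add: length_concat_replicate)
lemma bob_block_length: "length (bob_block u) = 3 * q" unfolding bob_block_def using q1 by (simp add: length_concat_replicate)

lemma interleave_blocks: "interleave (alice_block u) (bob_block v) =
  [e, unit M, f_if u, f_if v, unit M, e] @ concat (replicate (q - 1) [f_if u, e])
   @ concat (replicate (q - 1) [unit M, f_if v, unit M, e])"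
proof -
  have i1: "interleave (replicate (q - 1) (f_if u)) (replicate (q - 1) e) = concat (replicate (q - 1) [f_if u, e])"
    using interleave_replicate[of "[f_if u]" "[e]" "q - 1"] by (simp add: interleave_def)
  have i2: "interleave (concat (replicate (q - 1) [unit M, unit M])) (concat (replicate (q - 1) [f_if v, e]))
      = concat (replicate (q - 1) [unit M, f_if v, unit M, e])"
    using interleave_replicate[of "[unit M, unit M]" "[f_if v, e]" "q - 1"] by (simp add: interleave_def)
  have "interleave (alice_block u) (bob_block v) = interleave [e, f_if u, unit M] [unit M, f_if v, e]
     @ interleave (replicate (q - 1) (f_if u) @ concat (replicate (q - 1) [unit M, unit M]))
                  (replicate (q - 1) e @ concat (replicate (q - 1) [f_if v, e]))"
    unfolding alice_block_def bob_block_def by (rule interleave_append) simp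
  also have "\<dots> = interleave [e, f_if u, unit M] [unit M, f_if v, e]
     @ interleave (replicate (q - 1) (f_if u)) (replicate (q - 1) e)
     @ interleave (concat (replicate (q - 1) [unit M, unit M])) (concat (replicate (q - 1) [f_if v, e]))"
    by (subst interleave_append) simp_all
  finally show ?thesis using i1 i2 by (simp add: interleave_def)
qed

lemma cyc_f_e_steps: "mult M (cyc m) (lprod M (concat (replicate j [f_if u, e]))) = cyc (m + j * ind u)"
proof (induction j arbitrary: m)
  case 0 then show ?case using om_runit[OF OM cyc_closed] by (simp add: lprod_def)
next
  case (Suc j)
  define R where "R = concat (replicate j [f_if u, e])"
  have s: "set R \<subseteq> carrier M" unfolding R_def using f_if_closed ec by (cases "j = 0") auto
  have eq: "concat (replicate (Suc j) [f_if u, e]) = [f_if u, e] @ R" unfolding R_def by simp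
  have X: "lprod M [f_if u, e] = mult M (f_if u) e" using om_runit[OF OM ec] by (simp add: lprod_def)
  have Xc: "mult M (f_if u) e \<in> carrier M" using om_closed[OF OM f_if_closed ec] .
  have "mult M (cyc m) (lprod M (concat (replicate (Suc j) [f_if u, e])))
      = mult M (cyc m) (mult M (mult M (f_if u) e) (lprod M R))"
    unfolding eq using lprod_append[OF OM _ s, of "[f_if u, e]"] f_if_closed ec X by simp
  also have "\<dots> = mult M (mult M (cyc m) (mult M (f_if u) e)) (lprod M R)"
    using om_assoc[OF OM cyc_closed Xc lprod_closed[OF OM s]] by simp
  also have "mult M (cyc m) (mult M (f_if u) e) = cyc (m + ind u)"
    using cyc_fe cyc_e om_lunit[OF OM ec] unfolding f_if_def ind_def by auto
  also have "mult M (cyc (m + ind u)) (lprod M R) = cyc (m + ind u + j * ind u)"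
    unfolding R_def by (rule Suc.IH)
  finally show ?case by (simp add: algebra_simps)
qed

lemma cyc_f_e_steps_padded: "mult M (cyc m) (lprod M (concat (replicate j [unit M, f_if v, unit M, e]))) = cyc (m + j * ind v)"
proof -
  have "lprod M (concat (replicate j [unit M, f_if v, unit M, e])) = lprod M (concat (replicate j [f_if v, e]))"
  proof -
    have s1: "set [unit M, f_if v, unit M, e] \<subseteq> carrier M" "set [f_if v, e] \<subseteq> carrier M"
      using f_if_closed ec om_unit[OF OM] by auto
    have "lprod M [unit M, f_if v, unit M, e] = lprod M [f_if v, e]"
      using om_lunit[OF OM] om_runit[OF OM] f_if_closed ec om_closed[OF OM f_if_closed ec] by (simp add: lprod_def)
    then show ?thesis using lprod_concat_replicate[OF OM s1(1)] lprod_concat_replicate[OF OM s1(2)] by simp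
  qed
  then show ?thesis using cyc_f_e_steps by simp
qed

lemma block_product: "lprod M (interleave (alice_block u) (bob_block v)) = cyc (block_exp u v)"
proof -
  define w1 where "w1 = [e, unit M, f_if u, f_if v, unit M, e]"
  define w2 where "w2 = concat (replicate (q - 1) [f_if u, e])"
  define w3 where "w3 = concat (replicate (q - 1) [unit M, f_if v, unit M, e])"
  have s1: "set w1 \<subseteq> carrier M" unfolding w1_def using f_if_closed ec om_unit[OF OM] by auto
  have s2: "set w2 \<subseteq> carrier M" unfolding w2_def using f_if_closed ec by (cases "q - 1 = 0") auto
  have s3: "set w3 \<subseteq> carrier M" unfolding w3_def using f_if_closed ec om_unit[OF OM] by (cases "q - 1 = 0") auto
  have "lprod M w1 = mult M e (mult M (f_if u) (mult M (f_if v) e))"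
    unfolding w1_def using om_lunit[OF OM] om_runit[OF OM] f_if_closed ec om_closed[OF OM f_if_closed ec]
      om_closed[OF OM f_if_closed om_closed[OF OM f_if_closed ec]] by (simp add: lprod_def)
  also have "\<dots> = cyc (if u \<or> v then 1 else 0)"
  proof -
    have E1: "cyc 1 = mult M e (mult M f e)"
      unfolding cyc_def using om_runit[OF OM phi_closed] om_assoc[OF OM ec fc ec] by simp
    show ?thesis
      unfolding f_if_def using E1 cyc_0 ee om_lunit[OF OM ec] om_lunit[OF OM om_closed[OF OM fc ec]]
        om_assoc[OF OM fc fc ec] ff by auto
  qed
  finally have p1: "lprod M w1 = cyc (if u \<or> v then 1 else 0)" .
  have "lprod M (interleave (alice_block u) (bob_block v)) = mult M (lprod M w1) (mult M (lprod M w2) (lprod M w3))"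
    unfolding interleave_blocks w1_def[symmetric] w2_def[symmetric] w3_def[symmetric]
    using lprod_append[OF OM s1, of "w2 @ w3"] lprod_append[OF OM s2 s3] s2 s3 by simp
  also have "\<dots> = mult M (mult M (lprod M w1) (lprod M w2)) (lprod M w3)"
    using om_assoc[OF OM lprod_closed[OF OM s1] lprod_closed[OF OM s2] lprod_closed[OF OM s3]] by simp
  also have "mult M (lprod M w1) (lprod M w2) = cyc ((if u \<or> v then 1 else 0) + (q - 1) * ind u)"
    unfolding p1 w2_def using cyc_f_e_steps by (simp add: mult.commute)
  also have "mult M \<dots> (lprod M w3) = cyc (block_exp u v)"
    unfolding w3_def block_exp_def using cyc_f_e_steps_padded by (simp add: mult.commute)
  finally show ?thesis .
qed

lemma block_exp_sum:
  "(\<Sum>(u, v)\<leftarrow>ps. block_exp u v) + length (filter (\<lambda>(u, v). u \<and> v) ps)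
   = q * (\<Sum>(u, v)\<leftarrow>ps. ind u + ind v)"
proof (induction ps)
  case (Cons z ps)
  obtain u v where z: "z = (u, v)" by (cases z)
  define X where "X = (\<Sum>(x, y)\<leftarrow>ps. ind x + ind y)"
  have "block_exp u v + ind (u \<and> v) = q * (ind u + ind v)"
    unfolding block_exp_def ind_def using q1 by (cases u; cases v) (auto simp: algebra_simps)
  moreover have "length (filter (\<lambda>(x, y). x \<and> y) (z # ps)) = ind (u \<and> v) + length (filter (\<lambda>(x, y). x \<and> y) ps)"
    unfolding z ind_def by simp
  moreover have "(\<Sum>(x, y)\<leftarrow>z # ps. ind x + ind y) = ind u + ind v + X"
    unfolding z X_def by simp
  moreover have "q * (ind u + ind v + X) = q * (ind u + ind v) + q * X"
    by (simp add: distrib_left)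
  ultimately show ?case using Cons.IH unfolding X_def z by simp
qed simp

lemma Tq_gadget: "gadget M {x \<in> carrier M. le M x e} (\<lambda>c. q dvd c) (3 * q) alice_block bob_block"
proof -
  have sA: "set (alice_block u) \<subseteq> carrier M" for u
    unfolding alice_block_def using ec f_if_closed om_unit[OF OM] by (cases "q - 1 = 0") auto
  have sB: "set (bob_block u) \<subseteq> carrier M" for u
    unfolding bob_block_def using ec f_if_closed om_unit[OF OM] by (cases "q - 1 = 0") auto
  have sI: "set (interleave (alice_block u) (bob_block v)) \<subseteq> carrier M" for u v
    using interleave_set[of "alice_block u" "bob_block v"] sA[of u] sB[of v] by blast
  have total: "ps \<noteq> [] \<Longrightarrow>
      lprod M (concat (map (\<lambda>(u, v). interleave (alice_block u) (bob_block v)) ps))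
      = cyc (\<Sum>(u, v)\<leftarrow>ps. block_exp u v)" for ps
  proof (induction ps)
    case (Cons z ps)
    obtain u v where z: "z = (u, v)" by (cases z)
    show ?case
    proof (cases "ps = []")
      case True
      then show ?thesis using block_product z om_runit[OF OM cyc_closed] by (simp add: lprod_def)
    next
      case False
      have "set (concat (map (\<lambda>(u, v). interleave (alice_block u) (bob_block v)) ps)) \<subseteq> carrier M"
        using sI by auto
      then show ?thesis
        using lprod_append[OF OM sI] Cons.IH[OF False] block_product cyc_add z by simp
    qed
  qed simp
  have count: "q dvd (\<Sum>(u, v)\<leftarrow>ps. block_exp u v) \<longleftrightarrow> q dvd length (filter (\<lambda>(u, v). u \<and> v) ps)" for ps
    using block_exp_sum[of ps] by (metis dvd_add_right_iff dvd_add_left_iff dvd_triv_left)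
  show ?thesis
    unfolding gadget_def
  proof (intro conjI allI impI)
    show "order_ideal M {x \<in> carrier M. le M x e}"
      unfolding order_ideal_def using om_trans[OF OM _ _ ec] by blast
    show "0 < 3 * q" using q1 by simp
    fix u
    show "length (alice_block u) = 3 * q" "length (bob_block u) = 3 * q"
      by (simp_all add: alice_block_length bob_block_length)
    show "set (alice_block u) \<subseteq> carrier M" "set (bob_block u) \<subseteq> carrier M" using sA sB by blast+
  next
    fix ps :: "(bool \<times> bool) list" assume ne: "ps \<noteq> []"
    show "(lprod M (concat (map (\<lambda>(u, v). interleave (alice_block u) (bob_block v)) ps))
        \<in> {x \<in> carrier M. le M x e}) = (q dvd length (filter (\<lambda>(u, v). u \<and> v) ps))"
      unfolding total[OF ne] using cyc_closed cyc_le_e_iff cyc_e_iff count by simp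
  qed
qed

end

lemma Tq_hard_gadget:
  assumes OM: "ordered_monoid M" and q: "q > 1" and T: "is_Tq M q"
  shows "hard_gadget M"
proof -
  obtain e f where ef: "e \<in> carrier M" "f \<in> carrier M" "mult M e e = e" "mult M f f = f"
    "mult M (opow M (mult M e f) q) e = e"
    "\<And>r. r > 0 \<Longrightarrow> \<not> q dvd r \<Longrightarrow> mult M (opow M (mult M e f) r) e \<noteq> e"
    using T unfolding is_Tq_def by blast
  show ?thesis
    using modular_gadget_hard[OF Tq_gadget[OF OM ef q]] q by simp
qed

theorem mainTheorem14:
  fixes M :: "'m omonoid"
  assumes "ordered_monoid M" and "finite (carrier M)"
    and "(\<exists>q::nat. q > 1 \<and> is_Tq M q)
         \<or> odivides BA2_plus M
         \<or> odivides U_plus M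
         \<or> (\<exists>G :: nat omonoid. ordered_monoid G \<and> is_group G \<and> noncommutative G \<and> odivides G M)"
  shows "N1_mon M \<in> \<Omega>(\<lambda>n. real n)"
proof -
  note OM = assms(1)
  have "hard_gadget M"
    using assms(3)
  proof (elim disjE exE conjE)
    fix q :: nat assume "q > 1" "is_Tq M q"
    then show ?thesis using Tq_hard_gadget[OF OM] by blast
  next
    assume "odivides BA2_plus M"
    then show ?thesis using hard_gadget_divides[OF OM _ hard_gadget_BA2_plus] by blast
  next
    assume "odivides U_plus M"
    then show ?thesis using hard_gadget_divides[OF OM _ hard_gadget_U_plus] by blast
  next
    fix G :: "nat omonoid"
    assume G: "ordered_monoid G" "is_group G" "noncommutative G" and D: "odivides G M"
    have "finite (carrier G)"
      using D assms(2) unfolding odivides_def by (metis finite_imageI finite_subset)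
    then show ?thesis using hard_gadget_divides[OF OM D group_gadget[OF G(1,2) _ G(3)]] by blast
  qed
  then show ?thesis by (rule hard_gadget_omega[OF OM assms(2)])
qed

end
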